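(* Let $d,M\ge1$, let $\mathcal{X}$ be the set of (represented) graphs with at most $M$ nodes whose node embeddings lie in $\mathbb{R}^d$ with Euclidean norm at most $1$, let $\gamma>0$, and let $p$ be a probability distribution over random graphs $G_\omega$. Define $\phi_{G_\omega}(G)=\exp(-\gamma\,\mathrm{EMD}(G,G_\omega))$ and the kernel $k(G_x,G_y)=\int p(G_\omega)\phi_{G_\omega}(G_x)\phi_{G_\omega}(G_y)\,dG_\omega$. Let $G_{\omega_1},\dots,G_{\omega_R}$ be i.i.d. samples from $p$, let $\tilde{k}(G_x,G_y)=\frac1R\sum_{i=1}^R\phi_{G_{\omega_i}}(G_x)\phi_{G_{\omega_i}}(G_y)$ and $\Delta_R=k-\tilde{k}$. Then for every $\epsilon>0$, $$P\Big\{\sup_{G_x,G_y\in\mathcal{X}}|\Delta_R(G_x,G_y)|\le\epsilon\Big\}\ \ge\ 1-2\Big(1+\frac{16\gamma}{\epsilon}\Big)^{2dM}\exp(-R\epsilon^2/8).$$ Consequently, to guarantee $|\Delta_R(G_x,G_y)|\le\epsilon$ for all $G_x,G_y\in\mathcal{X}$ with probability at least $1-\delta$, it suffices to have $$R=\Omega\Big(\frac{Md}{\epsilon^2}\log\big(1+\frac{16\gamma}{\epsilon}\big)+\frac{1}{\epsilon^2}\big[\log(\tfrac1\delta)+\mathrm{const}\big]\Big).$$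
   Context: A graph $G$ with $n$ nodes is represented by node embeddings $\{\boldsymbol{u}_i\}_{i=1}^n\subset\mathbb{R}^d$ and a weight vector $\boldsymbol{t}^{(G)}\in\mathbb{R}^n_{\ge0}$ with entries summing to $1$. For graphs $G_x$ (embeddings $\boldsymbol{u}_i$, $n_x$ nodes) and $G_y$ (embeddings $\boldsymbol{v}_j$, $n_y$ nodes), $\mathrm{EMD}(G_x,G_y)=\min\{\langle\mathcal{D},\mathcal{T}\rangle : \mathcal{T}\in\mathbb{R}_{+}^{n_x\times n_y},\ \mathcal{T}\mathbf{1}=\boldsymbol{t}^{(G_x)},\ \mathcal{T}^T\mathbf{1}=\boldsymbol{t}^{(G_y)}\}$ with $\mathcal{D}_{ij}=\|\boldsymbol{u}_i-\boldsymbol{v}_j\|_2$; it is a metric. A random graph $G_\omega$ is a collection of $D\in\{1,\dots,D_{\max}\}$ node embedding vectors $\boldsymbol{w}_1,\dots,\boldsymbol{w}_D\in\mathbb{R}^d$ (with node weights summing to $1$), and $p$ is a probability distribution on the space $\bigcup_{D=1}^{D_{\max}}(\mathbb{R}^d)^D$ of such random graphs. *)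

theory Defs
  imports "HOL-Probability.Probability"
begin

text \<open>A (represented) graph: number of nodes n, node embeddings U i (i < n),
  node weights t i (i < n).  Entries with index \<ge> n are irrelevant.\<close>
type_synonym 'd graph = "nat \<times> (nat \<Rightarrow> real^'d) \<times> (nat \<Rightarrow> real)"

definition nnodes :: "'d graph \<Rightarrow> nat" where "nnodes G = fst G"
definition emb :: "'d graph \<Rightarrow> nat \<Rightarrow> real^'d" where "emb G = fst (snd G)"
definition wts :: "'d graph \<Rightarrow> nat \<Rightarrow> real" where "wts G = snd (snd G)"

definition valid_weights :: "'d graph \<Rightarrow> bool" where
  "valid_weights G \<longleftrightarrow> (\<forall>i<nnodes G. wts G i \<ge> 0) \<and> (\<Sum>i<nnodes G. wts G i) = 1"

definition EMD :: "'d::finite graph \<Rightarrow> 'd graph \<Rightarrow> real" where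
  "EMD Gx Gy = Inf {(\<Sum>i<nnodes Gx. \<Sum>j<nnodes Gy. T i j * dist (emb Gx i) (emb Gy j)) | T.
       (\<forall>i j. T i j \<ge> (0::real)) \<and>
       (\<forall>i<nnodes Gx. (\<Sum>j<nnodes Gy. T i j) = wts Gx i) \<and>
       (\<forall>j<nnodes Gy. (\<Sum>i<nnodes Gx. T i j) = wts Gy j)}"

definition graph_space :: "nat \<Rightarrow> 'd::finite graph set" where
  "graph_space M = {G. 1 \<le> nnodes G \<and> nnodes G \<le> M \<and> valid_weights G \<and>
                        (\<forall>i<nnodes G. norm (emb G i) \<le> 1)}"

definition random_graphs :: "nat \<Rightarrow> 'd::finite graph set" where
  "random_graphs Dmax = {G. 1 \<le> nnodes G \<and> nnodes G \<le> Dmax \<and> valid_weights G}"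

definition rg_space :: "'d::finite graph measure" where
  "rg_space = count_space UNIV \<Otimes>\<^sub>M (PiM UNIV (\<lambda>_. borel) \<Otimes>\<^sub>M PiM UNIV (\<lambda>_. borel))"

definition phi :: "real \<Rightarrow> 'd::finite graph \<Rightarrow> 'd graph \<Rightarrow> real" where
  "phi \<gamma> G\<omega> G = exp (- \<gamma> * EMD G G\<omega>)"

definition kern :: "'d::finite graph measure \<Rightarrow> real \<Rightarrow> 'd graph \<Rightarrow> 'd graph \<Rightarrow> real" where
  "kern p \<gamma> Gx Gy = (\<integral>\<omega>. phi \<gamma> \<omega> Gx * phi \<gamma> \<omega> Gy \<partial>p)"

definition kern_approx :: "nat \<Rightarrow> real \<Rightarrow> (nat \<Rightarrow> 'd::finite graph) \<Rightarrow> 'd graph \<Rightarrow> 'd graph \<Rightarrow> real" where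
  "kern_approx R \<gamma> ws Gx Gy = (1 / real R) * (\<Sum>i<R. phi \<gamma> (ws i) Gx * phi \<gamma> (ws i) Gy)"

end

theory Submission
  imports Defs
begin

text \<open>EMD is a metric on weighted point clouds, so each feature \<phi> \<gamma> \<omega> = exp (- \<gamma> EMD(-, \<omega>))
  is \<gamma>-Lipschitz with values in [0,1], and the approximation error of the empirical kernel
  is 2\<gamma>-Lipschitz in the pair of input graphs.  At a fixed pair, Hoeffding's inequality bounds
  the probability of an error \<ge> \<tau> by 2 exp(-2 R \<tau>^2).  The input space is totally bounded for
  EMD: rounding node embeddings to a net of the unit ball and weights to a grid gives an explicit
  finite r-net.  A union bound over pairs of net points, with the Lipschitz estimate covering the
  rest of the space, gives the uniform bound; the sample-size statement is its logarithmic
  inversion.\<close>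

section \<open>Earth mover's distance\<close>

lemma graph_parts [simp]: "nnodes (n, z) = n" "emb (n, z) = fst z" "wts (n, z) = snd z"
  by (simp_all add: nnodes_def emb_def wts_def)

definition transport_plan :: "'d::finite graph \<Rightarrow> 'd graph \<Rightarrow> (nat \<Rightarrow> nat \<Rightarrow> real) \<Rightarrow> bool" where
  "transport_plan x y T \<longleftrightarrow> (\<forall>i j. T i j \<ge> 0) \<and>
     (\<forall>i<nnodes x. (\<Sum>j<nnodes y. T i j) = wts x i) \<and> (\<forall>j<nnodes y. (\<Sum>i<nnodes x. T i j) = wts y j)"

definition transport_cost :: "'d::finite graph \<Rightarrow> 'd graph \<Rightarrow> (nat \<Rightarrow> nat \<Rightarrow> real) \<Rightarrow> real" where
  "transport_cost x y T = (\<Sum>i<nnodes x. \<Sum>j<nnodes y. T i j * dist (emb x i) (emb y j))"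

lemma EMD_eq_Inf_transport_cost: "EMD x y = Inf (transport_cost x y ` Collect (transport_plan x y))"
  unfolding EMD_def transport_plan_def transport_cost_def by (rule arg_cong[where f = Inf]) auto

lemma transport_cost_nonneg: "transport_plan x y T \<Longrightarrow> transport_cost x y T \<ge> 0"
  unfolding transport_cost_def transport_plan_def by (intro sum_nonneg mult_nonneg_nonneg) auto

lemma bdd_below_transport_cost: "bdd_below (transport_cost x y ` Collect (transport_plan x y))"
  by (rule bdd_belowI[where m = 0]) (auto intro: transport_cost_nonneg)

lemma EMD_le_transport_cost: "transport_plan x y T \<Longrightarrow> EMD x y \<le> transport_cost x y T"
  unfolding EMD_eq_Inf_transport_cost by (rule cInf_lower) (auto intro: bdd_below_transport_cost)

definition product_plan :: "'d::finite graph \<Rightarrow> 'd graph \<Rightarrow> nat \<Rightarrow> nat \<Rightarrow> real" where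
  "product_plan x y i j = (if i < nnodes x \<and> j < nnodes y then wts x i * wts y j else 0)"

lemma transport_plan_product_plan:
  "valid_weights x \<Longrightarrow> valid_weights y \<Longrightarrow> transport_plan x y (product_plan x y)"
  unfolding transport_plan_def product_plan_def valid_weights_def
  by (auto simp: sum_distrib_left[symmetric] sum_distrib_right[symmetric])

lemma EMD_nonneg: "valid_weights x \<Longrightarrow> valid_weights y \<Longrightarrow> EMD x y \<ge> 0"
  unfolding EMD_eq_Inf_transport_cost
  by (rule cInf_greatest) (auto intro: transport_plan_product_plan transport_cost_nonneg)

lemma transport_cost_less_EMD_add:
  assumes "valid_weights x" "valid_weights y" "e > 0"
  obtains T where "transport_plan x y T" "transport_cost x y T < EMD x y + e"
proof -
  have "transport_cost x y ` Collect (transport_plan x y) \<noteq> {}"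
    using transport_plan_product_plan assms by blast
  moreover have "Inf (transport_cost x y ` Collect (transport_plan x y)) < EMD x y + e"
    using assms by (simp add: EMD_eq_Inf_transport_cost)
  ultimately obtain T where "transport_plan x y T" "transport_cost x y T < EMD x y + e"
    using cInf_lessD by (metis (no_types, lifting) imageE mem_Collect_eq)
  then show ?thesis by (rule that)
qed

lemma valid_weights_if_transport_plan:
  assumes "valid_weights x" "transport_plan x y T" shows "valid_weights y"
proof -
  have "(\<Sum>j<nnodes y. wts y j) = (\<Sum>j<nnodes y. \<Sum>i<nnodes x. T i j)"
    using assms(2) unfolding transport_plan_def by simp
  also have "\<dots> = (\<Sum>i<nnodes x. \<Sum>j<nnodes y. T i j)" by (rule sum.swap)
  also have "\<dots> = 1" using assms unfolding transport_plan_def valid_weights_def by simp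
  finally have "(\<Sum>j<nnodes y. wts y j) = 1" .
  moreover have "wts y j \<ge> 0" if "j < nnodes y" for j
  proof -
    have "(\<Sum>i<nnodes x. T i j) \<ge> 0" using assms(2) unfolding transport_plan_def by (simp add: sum_nonneg)
    then show ?thesis using assms(2) that unfolding transport_plan_def by simp
  qed
  ultimately show ?thesis unfolding valid_weights_def by simp
qed

lemma EMD_of_invalid:
  assumes "valid_weights x" "\<not> valid_weights y" shows "EMD x y = Inf {}"
proof -
  have "Collect (transport_plan x y) = {}" using valid_weights_if_transport_plan assms by blast
  then show ?thesis unfolding EMD_eq_Inf_transport_cost by (simp only: image_empty)
qed

lemma EMD_sym: "EMD x y = EMD y x"
proof -
  have swap: "transport_cost x y ` Collect (transport_plan x y) \<subseteq> transport_cost y x ` Collect (transport_plan y x)"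
    for x y
  proof
    fix c assume "c \<in> transport_cost x y ` Collect (transport_plan x y)"
    then obtain T where "transport_plan x y T" "c = transport_cost x y T" by auto
    moreover have "transport_cost y x (\<lambda>i j. T j i) = transport_cost x y T"
      unfolding transport_cost_def by (subst sum.swap) (simp add: dist_commute)
    ultimately show "c \<in> transport_cost y x ` Collect (transport_plan y x)"
      unfolding transport_plan_def by (auto intro!: image_eqI[where x = "\<lambda>i j. T j i"])
  qed
  show ?thesis unfolding EMD_eq_Inf_transport_cost using swap[of x y] swap[of y x] by simp
qed

text \<open>Gluing two plans through the middle graph b; division by a zero weight of b yields 0,
  which is harmless because the corresponding row of T and column of C vanish.\<close>

definition glued_plan :: "'d::finite graph \<Rightarrow> (nat \<Rightarrow> nat \<Rightarrow> real) \<Rightarrow> (nat \<Rightarrow> nat \<Rightarrow> real) \<Rightarrow> nat \<Rightarrow> nat \<Rightarrow> real"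
  where "glued_plan b C T k j = (\<Sum>i<nnodes b. C k i * T i j / wts b i)"

lemma transport_plan_entry_zero:
  assumes "transport_plan x y T" "i < nnodes x" "j < nnodes y"
  shows "wts x i = 0 \<Longrightarrow> T i j = 0" and "wts y j = 0 \<Longrightarrow> T i j = 0"
  using assms sum_nonneg_eq_0_iff[of "{..<nnodes y}" "T i"] sum_nonneg_eq_0_iff[of "{..<nnodes x}" "\<lambda>i. T i j"]
  unfolding transport_plan_def by auto

lemma transport_plan_weight_nonneg:
  assumes "transport_plan x y T" "i < nnodes x" shows "wts x i \<ge> 0"
  using assms sum_nonneg[of "{..<nnodes y}" "T i"] unfolding transport_plan_def by auto

lemma sum_glued_left:
  assumes C: "transport_plan a b C" and T: "transport_plan b c T" and k: "k < nnodes a"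
  shows "(\<Sum>j<nnodes c. \<Sum>i<nnodes b. C k i * T i j / wts b i * f i) = (\<Sum>i<nnodes b. C k i * f i)"
proof -
  have "(\<Sum>j<nnodes c. \<Sum>i<nnodes b. C k i * T i j / wts b i * f i)
      = (\<Sum>i<nnodes b. C k i / wts b i * f i * (\<Sum>j<nnodes c. T i j))"
    by (subst sum.swap) (simp add: sum_distrib_left sum_divide_distrib mult_ac)
  also have "\<dots> = (\<Sum>i<nnodes b. C k i * f i)"
  proof (intro sum.cong refl)
    fix i assume "i \<in> {..<nnodes b}"
    then show "C k i / wts b i * f i * (\<Sum>j<nnodes c. T i j) = C k i * f i"
      using T C k transport_plan_entry_zero(2)[OF C k] unfolding transport_plan_def by auto
  qed
  finally show ?thesis .
qed

lemma sum_glued_right: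
  assumes C: "transport_plan a b C" and T: "transport_plan b c T" and j: "j < nnodes c"
  shows "(\<Sum>k<nnodes a. \<Sum>i<nnodes b. C k i * T i j / wts b i * g i) = (\<Sum>i<nnodes b. T i j * g i)"
proof -
  have "(\<Sum>k<nnodes a. \<Sum>i<nnodes b. C k i * T i j / wts b i * g i)
      = (\<Sum>i<nnodes b. T i j / wts b i * g i * (\<Sum>k<nnodes a. C k i))"
    by (subst sum.swap) (simp add: sum_distrib_left sum_divide_distrib mult_ac)
  also have "\<dots> = (\<Sum>i<nnodes b. T i j * g i)"
  proof (intro sum.cong refl)
    fix i assume "i \<in> {..<nnodes b}"
    then show "T i j / wts b i * g i * (\<Sum>k<nnodes a. C k i) = T i j * g i"
      using T C j transport_plan_entry_zero(1)[OF T _ j] unfolding transport_plan_def by auto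
  qed
  finally show ?thesis .
qed

lemma transport_plan_glued_plan:
  assumes C: "transport_plan a b C" and T: "transport_plan b c T"
  shows "transport_plan a c (glued_plan b C T)"
  unfolding transport_plan_def
proof (intro conjI allI impI)
  fix k j show "glued_plan b C T k j \<ge> 0"
    unfolding glued_plan_def using C T transport_plan_weight_nonneg[OF T]
    by (intro sum_nonneg) (auto simp: transport_plan_def)
next
  fix k assume "k < nnodes a"
  then show "(\<Sum>j<nnodes c. glued_plan b C T k j) = wts a k"
    using sum_glued_left[OF C T, of k "\<lambda>_. 1"] C unfolding glued_plan_def transport_plan_def by simp
next
  fix j assume "j < nnodes c"
  then show "(\<Sum>k<nnodes a. glued_plan b C T k j) = wts c j"
    using sum_glued_right[OF C T, of j "\<lambda>_. 1"] T unfolding glued_plan_def transport_plan_def by simp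
qed

lemma transport_cost_glued_plan_le:
  assumes C: "transport_plan a b C" and T: "transport_plan b c T"
  shows "transport_cost a c (glued_plan b C T) \<le> transport_cost a b C + transport_cost b c T"
proof -
  let ?h = "\<lambda>k j i. C k i * T i j / wts b i"
  have h_nonneg: "?h k j i \<ge> 0" if "i < nnodes b" for k j i
    using C T transport_plan_weight_nonneg[OF T that] unfolding transport_plan_def by simp
  have "transport_cost a c (glued_plan b C T)
      = (\<Sum>k<nnodes a. \<Sum>j<nnodes c. \<Sum>i<nnodes b. ?h k j i * dist (emb a k) (emb c j))"
    unfolding transport_cost_def glued_plan_def by (simp add: sum_distrib_right)
  also have "\<dots> \<le> (\<Sum>k<nnodes a. \<Sum>j<nnodes c. \<Sum>i<nnodes b.
                     ?h k j i * dist (emb a k) (emb b i) + ?h k j i * dist (emb b i) (emb c j))"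
  proof (intro sum_mono)
    fix k j i assume "i \<in> {..<nnodes b}"
    then have "?h k j i * dist (emb a k) (emb c j) \<le> ?h k j i * (dist (emb a k) (emb b i) + dist (emb b i) (emb c j))"
      by (intro mult_left_mono[OF dist_triangle] h_nonneg) simp
    then show "?h k j i * dist (emb a k) (emb c j)
        \<le> ?h k j i * dist (emb a k) (emb b i) + ?h k j i * dist (emb b i) (emb c j)"
      by (simp only: distrib_left)
  qed
  also have "\<dots> = (\<Sum>k<nnodes a. \<Sum>j<nnodes c. \<Sum>i<nnodes b. ?h k j i * dist (emb a k) (emb b i))
                 + (\<Sum>j<nnodes c. \<Sum>k<nnodes a. \<Sum>i<nnodes b. ?h k j i * dist (emb b i) (emb c j))"
    by (simp add: sum.distrib sum.swap[of _ "{..<nnodes a}"])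
  also have "\<dots> = transport_cost a b C + (\<Sum>j<nnodes c. \<Sum>i<nnodes b. T i j * dist (emb b i) (emb c j))"
    using sum_glued_left[OF C T] sum_glued_right[OF C T] unfolding transport_cost_def by simp
  also have "\<dots> = transport_cost a b C + transport_cost b c T"
    unfolding transport_cost_def by (subst sum.swap) simp
  finally show ?thesis .
qed

lemma EMD_triangle:
  assumes "valid_weights a" "valid_weights b" "valid_weights c"
  shows "EMD a c \<le> EMD a b + EMD b c"
proof (rule field_le_epsilon)
  fix e :: real assume "e > 0"
  then obtain C T where C: "transport_plan a b C" "transport_cost a b C < EMD a b + e/2"
    and T: "transport_plan b c T" "transport_cost b c T < EMD b c + e/2"
    using transport_cost_less_EMD_add[of a b "e/2"] transport_cost_less_EMD_add[of b c "e/2"] assms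
    by (metis half_gt_zero)
  have "EMD a c \<le> transport_cost a c (glued_plan b C T)"
    by (rule EMD_le_transport_cost[OF transport_plan_glued_plan[OF C(1) T(1)]])
  then show "EMD a c \<le> EMD a b + EMD b c + e"
    using transport_cost_glued_plan_le[OF C(1) T(1)] C(2) T(2) by linarith
qed

lemma abs_EMD_diff_le:
  assumes "valid_weights x" "valid_weights x'"
  shows "\<bar>EMD x w - EMD x' w\<bar> \<le> EMD x x'"
proof (cases "valid_weights w")
  case True
  then show ?thesis
    using EMD_triangle[OF assms True] EMD_triangle[OF assms(2,1) True] EMD_sym[of x x'] by linarith
next
  case False
  then show ?thesis using EMD_of_invalid[OF assms(1) False] EMD_of_invalid[OF assms(2) False] EMD_nonneg[OF assms]
    by simp
qed

text \<open>For graphs with the same number of nodes: keep the common mass min(w_i, w'_i) in place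
  and spread the excess of x over the deficit of y proportionally.\<close>

definition excess :: "'d::finite graph \<Rightarrow> 'd graph \<Rightarrow> nat \<Rightarrow> real" where
  "excess x y i = wts x i - min (wts x i) (wts y i)"

definition overlap_plan :: "'d::finite graph \<Rightarrow> 'd graph \<Rightarrow> nat \<Rightarrow> nat \<Rightarrow> real" where
  "overlap_plan x y i j = (if i < nnodes x \<and> j < nnodes x then
     (if i = j then min (wts x i) (wts y i) else 0)
       + excess x y i * excess y x j / (\<Sum>l<nnodes x. excess x y l) else 0)"

lemma excess_nonneg: "excess x y i \<ge> 0"
  unfolding excess_def by simp

lemma sum_excess_swap:
  assumes "valid_weights x" "valid_weights y" "nnodes y = nnodes x"
  shows "(\<Sum>i<nnodes x. excess y x i) = (\<Sum>i<nnodes x. excess x y i)"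
proof -
  have "(\<Sum>i<nnodes x. min (wts y i) (wts x i)) = (\<Sum>i<nnodes x. min (wts x i) (wts y i))"
    by (intro sum.cong refl) (rule min.commute)
  moreover have "(\<Sum>i<nnodes x. excess x y i) = 1 - (\<Sum>i<nnodes x. min (wts x i) (wts y i))"
    "(\<Sum>i<nnodes x. excess y x i) = 1 - (\<Sum>i<nnodes x. min (wts y i) (wts x i))"
    using assms unfolding excess_def valid_weights_def by (simp_all add: sum_subtractf)
  ultimately show ?thesis by simp
qed

lemma excess_mult_div_sum:
  assumes "i < nnodes x"
  shows "excess x y i * (\<Sum>l<nnodes x. excess x y l) / (\<Sum>l<nnodes x. excess x y l) = excess x y i"
proof (cases "(\<Sum>l<nnodes x. excess x y l) = 0")
  case True
  then have "excess x y i = 0"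
    using assms sum_nonneg_eq_0_iff[of "{..<nnodes x}" "excess x y"] excess_nonneg by blast
  then show ?thesis by simp
qed simp

lemma transport_plan_overlap_plan:
  assumes vx: "valid_weights x" and vy: "valid_weights y" and nn: "nnodes y = nnodes x"
  shows "transport_plan x y (overlap_plan x y)"
proof -
  let ?n = "nnodes x" and ?m = "\<lambda>i. min (wts x i) (wts y i)" and ?\<delta> = "\<Sum>l<nnodes x. excess x y l"
  have m_nonneg: "?m i \<ge> 0" if "i < ?n" for i
    using vx vy nn that unfolding valid_weights_def by simp
  have entry: "overlap_plan x y i j = (if i = j then ?m i else 0) + excess x y i * excess y x j / ?\<delta>"
    if "i < ?n" "j < ?n" for i j
    using that unfolding overlap_plan_def by simp
  have rows: "(\<Sum>j<?n. overlap_plan x y i j) = wts x i" if i: "i < ?n" for i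
  proof -
    have "(\<Sum>j<?n. overlap_plan x y i j) = ?m i + excess x y i * (\<Sum>j<?n. excess y x j) / ?\<delta>"
      using i entry by (simp add: sum.distrib sum_divide_distrib sum_distrib_left)
    also have "\<dots> = ?m i + excess x y i"
      using excess_mult_div_sum[OF i] sum_excess_swap[OF vx vy nn] by simp
    finally show ?thesis unfolding excess_def by simp
  qed
  have cols: "(\<Sum>i<?n. overlap_plan x y i j) = wts y j" if j: "j < ?n" for j
  proof -
    have "(\<Sum>i<?n. overlap_plan x y i j) = ?m j + excess y x j * ?\<delta> / ?\<delta>"
      using j entry by (simp add: sum.distrib sum_divide_distrib sum_distrib_left mult.commute)
    also have "\<dots> = ?m j + excess y x j"
      using excess_mult_div_sum[of j y x] j nn sum_excess_swap[OF vx vy nn] by simp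
    finally show ?thesis unfolding excess_def by (simp add: min.commute)
  qed
  have "overlap_plan x y i j \<ge> 0" for i j
    using m_nonneg excess_nonneg[of x y] excess_nonneg[of y x] sum_nonneg[of "{..<?n}" "excess x y"]
    unfolding overlap_plan_def by (simp add: divide_nonneg_nonneg)
  then show ?thesis using rows cols nn unfolding transport_plan_def by simp
qed

lemma EMD_le_same_nnodes:
  assumes vx: "valid_weights x" and vy: "valid_weights y" and nn: "nnodes y = nnodes x"
    and D: "\<And>i j. i < nnodes x \<Longrightarrow> j < nnodes x \<Longrightarrow> dist (emb x i) (emb y j) \<le> D"
  shows "EMD x y \<le> (\<Sum>i<nnodes x. min (wts x i) (wts y i) * dist (emb x i) (emb y i))
                    + D * (\<Sum>i<nnodes x. \<bar>wts x i - wts y i\<bar>)"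
proof -
  let ?n = "nnodes x" and ?m = "\<lambda>i. min (wts x i) (wts y i)" and ?\<delta> = "\<Sum>l<nnodes x. excess x y l"
  let ?d = "\<lambda>i j. dist (emb x i) (emb y j)"
  have "?n \<noteq> 0"
  proof
    assume "?n = 0" then show False using vx unfolding valid_weights_def by simp
  qed
  then have D_nonneg: "D \<ge> 0" using D[of 0 0] zero_le_dist[of "emb x 0" "emb y 0"] by linarith
  have \<delta>_nonneg: "?\<delta> \<ge> 0" by (intro sum_nonneg excess_nonneg)
  have "transport_cost x y (overlap_plan x y)
      = (\<Sum>i<?n. ?m i * ?d i i) + (\<Sum>i<?n. \<Sum>j<?n. excess x y i * excess y x j / ?\<delta> * ?d i j)"
    unfolding transport_cost_def overlap_plan_def nn
    by (simp add: sum.distrib distrib_right if_distrib[of "\<lambda>a. a * _"] cong: if_cong)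
  also have "(\<Sum>i<?n. \<Sum>j<?n. excess x y i * excess y x j / ?\<delta> * ?d i j)
      \<le> (\<Sum>i<?n. \<Sum>j<?n. excess x y i * excess y x j / ?\<delta> * D)"
    by (intro sum_mono mult_left_mono D divide_nonneg_nonneg mult_nonneg_nonneg excess_nonneg \<delta>_nonneg) auto
  also have "\<dots> = D * ?\<delta> * (\<Sum>j<?n. excess y x j) / ?\<delta>"
    by (simp add: sum_distrib_left sum_distrib_right sum_divide_distrib mult_ac)
  also have "\<dots> = D * (?\<delta> * ?\<delta> / ?\<delta>)"
    using sum_excess_swap[OF vx vy nn] by simp
  also have "\<dots> \<le> D * (\<Sum>i<?n. \<bar>wts x i - wts y i\<bar>)"
  proof (rule mult_left_mono[OF _ D_nonneg])
    have "?\<delta> * ?\<delta> / ?\<delta> = ?\<delta>" by simp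
    also have "\<dots> \<le> (\<Sum>i<?n. \<bar>wts x i - wts y i\<bar>)" unfolding excess_def by (intro sum_mono) auto
    finally show "?\<delta> * ?\<delta> / ?\<delta> \<le> (\<Sum>i<?n. \<bar>wts x i - wts y i\<bar>)" .
  qed
  finally show ?thesis
    using EMD_le_transport_cost[OF transport_plan_overlap_plan[OF vx vy nn]] by linarith
qed

lemma valid_weights_if_graph_space: "x \<in> graph_space M \<Longrightarrow> valid_weights x"
  unfolding graph_space_def by simp

lemma dist_emb_le_two:
  assumes "x \<in> graph_space M" "y \<in> graph_space M'" "i < nnodes x" "j < nnodes y"
  shows "dist (emb x i) (emb y j) \<le> 2"
proof -
  have "norm (emb x i) \<le> 1" "norm (emb y j) \<le> 1" using assms unfolding graph_space_def by auto
  then show ?thesis using norm_triangle_ineq4[of "emb x i" "emb y j"] by (simp add: dist_norm)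
qed

lemma EMD_le_two:
  assumes x: "x \<in> graph_space M" and y: "y \<in> graph_space M'"
  shows "EMD x y \<le> 2"
proof -
  have vx: "valid_weights x" and vy: "valid_weights y" using x y by (auto intro: valid_weights_if_graph_space)
  have "EMD x y \<le> transport_cost x y (product_plan x y)"
    by (rule EMD_le_transport_cost[OF transport_plan_product_plan[OF vx vy]])
  also have "\<dots> \<le> (\<Sum>i<nnodes x. \<Sum>j<nnodes y. wts x i * wts y j * 2)"
    unfolding transport_cost_def product_plan_def
    using vx vy dist_emb_le_two[OF x y] unfolding valid_weights_def
    by (intro sum_mono) (auto intro!: mult_left_mono)
  also have "\<dots> = 2"
    using vx vy unfolding valid_weights_def by (simp add: sum_distrib_left[symmetric] sum_distrib_right[symmetric])
  finally show ?thesis .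
qed

lemma single_node_mem_graph_space:
  "M \<ge> 1 \<Longrightarrow> ((1::nat), (\<lambda>_. 0::real^'d::finite), (\<lambda>_. 1::real)) \<in> graph_space M"
  unfolding graph_space_def valid_weights_def by simp

section \<open>Finite nets of the input space\<close>

lemma card_separated_subset_unit_ball_le:
  fixes S :: "('a::euclidean_space) set" and r :: real
  assumes r: "r > 0" and fin: "finite S" and sub: "S \<subseteq> cball 0 1"
    and sep: "\<And>a b. a \<in> S \<Longrightarrow> b \<in> S \<Longrightarrow> a \<noteq> b \<Longrightarrow> r \<le> dist a b"
  shows "real (card S) \<le> (1 + 2 / r) ^ DIM('a)"
proof -
  let ?B = "\<lambda>s. ball s (r/2)"
  let ?c = "measure lborel (ball (0::'a) 1)"
  have cpos: "?c > 0" using content_ball_pos[of 1 "0::'a"] by simp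
  have ball_finite: "emeasure lborel (ball c \<rho>) \<noteq> \<infinity>" for c :: 'a and \<rho>
    using emeasure_lborel_ball_finite[of c \<rho>] by (simp add: less_top)
  have ball_fmeasurable: "ball (0::'a) \<rho> \<in> fmeasurable lborel" for \<rho>
    by (rule fmeasurableI[OF _ emeasure_lborel_ball_finite]) simp
  have disj: "disjoint_family_on ?B S"
    unfolding disjoint_family_on_def
  proof (intro ballI impI)
    fix a b assume ab: "a \<in> S" "b \<in> S" "a \<noteq> b"
    show "?B a \<inter> ?B b = {}"
    proof (rule ccontr)
      assume "?B a \<inter> ?B b \<noteq> {}"
      then obtain x where "dist a x < r/2" "dist b x < r/2" by auto
      then have "dist a b < r" using dist_triangle_half_r[of x a r b] by (simp add: dist_commute)
      then show False using sep[OF ab] by simp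
    qed
  qed
  have "measure lborel (\<Union>s\<in>S. ?B s) = (\<Sum>s\<in>S. measure lborel (?B s))"
    using fin disj ball_finite by (intro measure_finite_Union) auto
  also have "\<dots> = (\<Sum>s\<in>S. (r/2) ^ DIM('a) * ?c)"
    using r by (intro sum.cong refl content_ball_conv_unit_ball) simp
  also have "\<dots> = real (card S) * ((r/2) ^ DIM('a) * ?c)" by simp
  finally have eq: "measure lborel (\<Union>s\<in>S. ?B s) = real (card S) * ((r/2) ^ DIM('a) * ?c)" .
  have "(\<Union>s\<in>S. ?B s) \<subseteq> ball 0 (1 + r/2)"
  proof
    fix x assume "x \<in> (\<Union>s\<in>S. ?B s)"
    then obtain s where s: "s \<in> S" "dist s x < r/2" by auto
    have "norm s \<le> 1" using sub s(1) by auto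
    then have "norm x < 1 + r/2" using s(2) norm_triangle_ineq[of s "x - s"]
      by (simp add: dist_norm norm_minus_commute)
    then show "x \<in> ball 0 (1 + r/2)" by simp
  qed
  then have "measure lborel (\<Union>s\<in>S. ?B s) \<le> measure lborel (ball (0::'a) (1 + r/2))"
    using fin by (intro measure_mono_fmeasurable ball_fmeasurable) (auto intro!: borel_open open_UN)
  also have "\<dots> = (1 + r/2) ^ DIM('a) * ?c" using r by (intro content_ball_conv_unit_ball) simp
  finally have "real (card S) * (r/2) ^ DIM('a) \<le> (1 + r/2) ^ DIM('a)"
    using eq cpos by (simp add: mult.assoc[symmetric])
  then have "real (card S) \<le> (1 + r/2) ^ DIM('a) / (r/2) ^ DIM('a)"
    using r by (subst pos_le_divide_eq) auto
  also have "\<dots> = ((1 + r/2) / (r/2)) ^ DIM('a)" by (rule power_divide[symmetric])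
  also have "(1 + r/2) / (r/2) = 1 + 2 / r" using r by (simp add: field_simps)
  finally show ?thesis .
qed

text \<open>A maximal r-separated subset of the unit ball is an r-net of it.\<close>

lemma unit_ball_finite_net:
  fixes r :: real assumes r: "r > 0"
  obtains P :: "'a::euclidean_space set" where "finite P"
    "real (card P) \<le> (1 + 2 / r) ^ DIM('a)" "\<And>u. u \<in> cball 0 1 \<Longrightarrow> \<exists>p\<in>P. dist u p < r"
proof -
  define separated where "separated = {S::'a set. finite S \<and> S \<subseteq> cball 0 1 \<and> (\<forall>a\<in>S. \<forall>b\<in>S. a \<noteq> b \<longrightarrow> r \<le> dist a b)}"
  have card_le: "real (card S) \<le> (1 + 2 / r) ^ DIM('a)" if "S \<in> separated" for S
    using that unfolding separated_def by (intro card_separated_subset_unit_ball_le[OF r]) auto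
  define N where "N = nat \<lceil>(1 + 2 / r) ^ DIM('a)\<rceil>"
  have "card S \<le> N" if "S \<in> separated" for S using card_le[OF that] unfolding N_def by linarith
  moreover have "{} \<in> separated" unfolding separated_def by auto
  ultimately obtain S where S: "S \<in> separated" and max: "\<And>S'. S' \<in> separated \<Longrightarrow> card S' \<le> card S"
    using ex_has_greatest_nat[of "\<lambda>S. S \<in> separated" "{}" card "N + 1"] by force
  have "\<exists>p\<in>S. dist u p < r" if u: "u \<in> cball 0 1" for u
  proof (rule ccontr)
    assume "\<not> (\<exists>p\<in>S. dist u p < r)"
    then have far: "\<forall>p\<in>S. r \<le> dist u p" by auto
    then have "u \<notin> S" using r by fastforce
    moreover have "insert u S \<in> separated" using S u far unfolding separated_def by (auto simp: dist_commute)
    ultimately show False using max[of "insert u S"] S unfolding separated_def by simp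
  qed
  then show ?thesis using that S card_le[OF S] unfolding separated_def by blast
qed

lemma power_self_le_fact: "real n ^ n \<le> 3 ^ n * fact n"
proof -
  have s: "(\<lambda>k. real n ^ k / fact k) sums exp (real n)"
    using exp_converges[of "real n"] by (simp add: divide_inverse mult.commute)
  have "real n ^ n / fact n \<le> exp (real n)"
    using sum_le_suminf[of "\<lambda>k. real n ^ k / fact k" "{n}"] s by (simp add: sums_iff)
  also have "\<dots> = exp 1 ^ n" using exp_of_nat_mult[of n 1] by simp
  also have "\<dots> \<le> 3 ^ n" by (rule power_mono[OF exp_le]) simp
  finally show ?thesis by (simp add: divide_le_eq)
qed

lemma binomial_le_power:
  assumes "n \<ge> 1"
  shows "real (m choose n) \<le> (3 * real m / real n) ^ n"
proof -
  have "real ((m choose n) * fact n) \<le> real (m ^ n)"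
    by (simp only: of_nat_le_iff binomial_fact_pow)
  then have "real (m choose n) \<le> real m ^ n / fact n" by (simp add: field_simps)
  also have "\<dots> \<le> real m ^ n * (3 ^ n / real n ^ n)"
  proof -
    have "1 / fact n \<le> 3 ^ n / real n ^ n" using power_self_le_fact[of n] assms by (simp add: field_simps)
    from mult_left_mono[OF this, of "real m ^ n"] show ?thesis by simp
  qed
  also have "\<dots> = (3 * real m / real n) ^ n" by (simp add: power_divide power_mult_distrib)
  finally show ?thesis .
qed

lemma finite_lists_sum_le: "finite {ks::nat list. length ks = n \<and> sum_list ks \<le> q}"
proof (rule finite_subset)
  show "{ks::nat list. length ks = n \<and> sum_list ks \<le> q} \<subseteq> {ks. set ks \<subseteq> {..q} \<and> length ks = n}"
    by (auto dest: member_le_sum_list)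
qed (rule finite_lists_length_eq, simp)

lemma card_lists_sum_le:
  assumes "n \<ge> 1"
  shows "card {ks::nat list. length ks = n \<and> sum_list ks \<le> q} = (n + q) choose n"
proof -
  have eq: "{ks::nat list. length ks = n \<and> sum_list ks \<le> q} = (\<Union>N\<le>q. {ks. length ks = n \<and> sum_list ks = N})"
    by auto
  have fin: "finite {ks::nat list. length ks = n \<and> sum_list ks = N}" for N
    by (rule finite_subset[OF _ finite_lists_sum_le[of n N]]) auto
  have "card {ks::nat list. length ks = n \<and> sum_list ks \<le> q}
      = (\<Sum>N\<le>q. card {ks::nat list. length ks = n \<and> sum_list ks = N})"
    unfolding eq by (rule card_UN_disjoint) (auto simp: fin)
  also have "\<dots> = (\<Sum>N\<le>q. (n - 1) + N choose N)"
    using assms by (intro sum.cong refl) (simp add: card_length_sum_list add.commute)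
  also have "\<dots> = Suc (n - 1 + q) choose q" by (rule sum_choose_lower)
  also have "\<dots> = (n + q) choose n" using assms binomial_symmetric[of q "n + q"] by simp
  finally show ?thesis .
qed

lemma bounded_iff_bounded_on_nets:
  fixes F d :: "'a \<Rightarrow> 'a \<Rightarrow> real" and N :: "nat \<Rightarrow> 'a set"
  assumes N_sub: "\<And>m. N m \<subseteq> X" and N_cover: "\<And>m x. x \<in> X \<Longrightarrow> \<exists>y\<in>N m. d x y \<le> 1 / Suc m"
    and lip: "\<And>x y x' y'. x \<in> X \<Longrightarrow> y \<in> X \<Longrightarrow> x' \<in> X \<Longrightarrow> y' \<in> X \<Longrightarrow>
               \<bar>F x y - F x' y'\<bar> \<le> L * (d x x' + d y y')"
    and L: "L \<ge> 0"
  shows "(\<forall>x\<in>X. \<forall>y\<in>X. \<bar>F x y\<bar> \<le> \<epsilon>) \<longleftrightarrow> (\<forall>m. \<forall>x\<in>N m. \<forall>y\<in>N m. \<bar>F x y\<bar> \<le> \<epsilon> + 2 * L / Suc m)"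
proof
  assume "\<forall>x\<in>X. \<forall>y\<in>X. \<bar>F x y\<bar> \<le> \<epsilon>"
  moreover have "2 * L / Suc m \<ge> 0" for m using L by simp
  ultimately show "\<forall>m. \<forall>x\<in>N m. \<forall>y\<in>N m. \<bar>F x y\<bar> \<le> \<epsilon> + 2 * L / Suc m"
    using N_sub by (meson add_increasing2 subsetD)
next
  assume nets: "\<forall>m. \<forall>x\<in>N m. \<forall>y\<in>N m. \<bar>F x y\<bar> \<le> \<epsilon> + 2 * L / Suc m"
  have bound: "\<bar>F x y\<bar> \<le> \<epsilon> + 4 * L / Suc m" if x: "x \<in> X" and y: "y \<in> X" for x y m
  proof -
    obtain x' y' where x': "x' \<in> N m" "d x x' \<le> 1 / Suc m" and y': "y' \<in> N m" "d y y' \<le> 1 / Suc m"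
      using N_cover[OF x] N_cover[OF y] by blast
    have "\<bar>F x y - F x' y'\<bar> \<le> L * (1 / Suc m + 1 / Suc m)"
      using lip[OF x y, of x' y'] x' y' N_sub L by (meson add_mono mult_left_mono order_trans subsetD)
    also have "\<dots> = 2 * L / Suc m" by simp
    moreover have "\<bar>F x' y'\<bar> \<le> \<epsilon> + 2 * L / Suc m" using nets x'(1) y'(1) by blast
    moreover have "4 * L / Suc m = 2 * L / Suc m + 2 * L / Suc m" by simp
    ultimately show ?thesis by linarith
  qed
  have lim: "(\<lambda>m. \<epsilon> + 4 * L / Suc m) \<longlonglongrightarrow> \<epsilon>"
    using tendsto_add[OF tendsto_const LIMSEQ_Suc[OF lim_const_over_n[of "4 * L"]]] by simp
  show "\<forall>x\<in>X. \<forall>y\<in>X. \<bar>F x y\<bar> \<le> \<epsilon>"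
    using LIMSEQ_le_const[OF lim] bound by blast
qed

lemma finite_net_of_code:
  fixes code :: "'a \<Rightarrow> 'k" and d :: "'a \<Rightarrow> 'a \<Rightarrow> real"
  assumes K: "finite K" "code ` X \<subseteq> K" and close: "\<And>x y. x \<in> X \<Longrightarrow> y \<in> X \<Longrightarrow> code x = code y \<Longrightarrow> d x y \<le> r"
  shows "\<exists>N. finite N \<and> N \<subseteq> X \<and> card N \<le> card K \<and> (\<forall>x\<in>X. \<exists>y\<in>N. d x y \<le> r)"
proof -
  define pick where "pick k = (SOME x. x \<in> X \<and> code x = k)" for k
  have pick: "pick (code x) \<in> X \<and> code (pick (code x)) = code x" if "x \<in> X" for x
    unfolding pick_def by (rule someI_ex) (use that in blast)
  have fin: "finite (code ` X)" using K finite_subset by blast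
  have "card (pick ` code ` X) \<le> card K"
    using card_image_le[OF fin, of pick] card_mono[OF K] by linarith
  moreover have "\<exists>y\<in>pick ` code ` X. d x y \<le> r" if "x \<in> X" for x
    using that pick[OF that] close[of x "pick (code x)"] by auto
  ultimately show ?thesis using fin pick by (intro exI[of _ "pick ` code ` X"]) auto
qed

lemma EMD_le_of_close_nodes:
  assumes x: "x \<in> graph_space M" and y: "y \<in> graph_space M" and nn: "nnodes y = nnodes x"
    and emb_close: "\<And>i. i < nnodes x \<Longrightarrow> dist (emb x i) (emb y i) \<le> r / 2"
    and wts_close: "\<And>i. i < nnodes x \<Longrightarrow> \<bar>wts x i - wts y i\<bar> \<le> r / (4 * nnodes x)"
  shows "EMD x y \<le> r"
proof -
  let ?n = "nnodes x"
  have vx: "valid_weights x" and vy: "valid_weights y" and n: "?n \<ge> 1"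
    using x y unfolding graph_space_def by auto
  have wx: "wts x i \<ge> 0" and wy: "wts y i \<ge> 0" if "i < ?n" for i
    using vx vy nn that unfolding valid_weights_def by auto
  have "EMD x y \<le> (\<Sum>i<?n. min (wts x i) (wts y i) * dist (emb x i) (emb y i))
                  + 2 * (\<Sum>i<?n. \<bar>wts x i - wts y i\<bar>)"
    using dist_emb_le_two[OF x y] nn by (intro EMD_le_same_nnodes[OF vx vy nn]) auto
  also have "(\<Sum>i<?n. min (wts x i) (wts y i) * dist (emb x i) (emb y i)) \<le> (\<Sum>i<?n. wts x i * (r / 2))"
    using wx wy emb_close by (intro sum_mono mult_mono) auto
  also have "\<dots> = r / 2" unfolding sum_distrib_right[symmetric] using vx unfolding valid_weights_def by simp
  also have "(\<Sum>i<?n. \<bar>wts x i - wts y i\<bar>) \<le> (\<Sum>i<?n. r / (4 * ?n))"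
    using wts_close by (intro sum_mono) auto
  also have "\<dots> = r / 4" using n by simp
  finally show ?thesis by simp
qed

definition graph_code :: "(real^'d \<Rightarrow> real^'d) \<Rightarrow> (nat \<Rightarrow> nat) \<Rightarrow> 'd::finite graph \<Rightarrow> (real^'d) list \<times> nat list"
  where "graph_code f q x = (map (f \<circ> emb x) [0..<nnodes x],
                             map (\<lambda>i. nat \<lfloor>real (q (nnodes x)) * wts x i\<rfloor>) [0..<nnodes x])"

definition code_space :: "'a set \<Rightarrow> (nat \<Rightarrow> nat) \<Rightarrow> nat \<Rightarrow> ('a list \<times> nat list) set" where
  "code_space P q M = (\<Union>n\<in>{1..M}. {ps. set ps \<subseteq> P \<and> length ps = n} \<times> {ks. length ks = n \<and> sum_list ks \<le> q n})"

lemma graph_code_mem: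
  assumes x: "x \<in> graph_space M" and f: "\<And>u. norm u \<le> 1 \<Longrightarrow> f u \<in> P"
  shows "graph_code f q x \<in> code_space P q M"
proof -
  let ?n = "nnodes x"
  have vx: "valid_weights x" and n: "1 \<le> ?n" "?n \<le> M" and norms: "\<forall>i<?n. norm (emb x i) \<le> 1"
    using x unfolding graph_space_def by auto
  have "real (\<Sum>i<?n. nat \<lfloor>real (q ?n) * wts x i\<rfloor>) \<le> (\<Sum>i<?n. real (q ?n) * wts x i)"
    unfolding of_nat_sum using vx unfolding valid_weights_def by (intro sum_mono) auto
  also have "\<dots> = real (q ?n)"
    using vx unfolding valid_weights_def by (simp add: sum_distrib_left[symmetric])
  finally have "sum_list (map (\<lambda>i. nat \<lfloor>real (q ?n) * wts x i\<rfloor>) [0..<?n]) \<le> q ?n"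
    unfolding interv_sum_list_conv_sum_set_nat atLeast0LessThan set_upt by (simp only: of_nat_le_iff)
  then show ?thesis unfolding graph_code_def code_space_def using n norms f by (auto intro!: bexI[of _ ?n])
qed

lemma EMD_le_if_graph_code_eq:
  assumes x: "x \<in> graph_space M" and y: "y \<in> graph_space M" and r: "r > 0"
    and f: "\<And>u. norm u \<le> 1 \<Longrightarrow> dist u (f u) < r / 4" and q: "\<And>n. real (q n) \<ge> 4 * real n / r"
    and code: "graph_code f q x = graph_code f q y"
  shows "EMD x y \<le> r"
proof -
  let ?n = "nnodes x" and ?q = "real (q (nnodes x))"
  have nn: "nnodes y = ?n" using arg_cong[OF code, of "length \<circ> fst"] unfolding graph_code_def by simp
  have nth: "f (emb x i) = f (emb y i)" "nat \<lfloor>?q * wts x i\<rfloor> = nat \<lfloor>?q * wts y i\<rfloor>" if "i < ?n" for i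
    using arg_cong[OF code, of "\<lambda>c. fst c ! i"] arg_cong[OF code, of "\<lambda>c. snd c ! i"] that nn
    unfolding graph_code_def by simp_all
  have n: "?n \<ge> 1" and norms: "\<forall>i<?n. norm (emb x i) \<le> 1 \<and> norm (emb y i) \<le> 1"
    and wts: "\<forall>i<?n. wts x i \<ge> 0 \<and> wts y i \<ge> 0"
    using x y nn unfolding graph_space_def valid_weights_def by auto
  have "4 * real ?n / r > 0" using n r by simp
  then have q_pos: "?q > 0" using q[of ?n] by linarith
  show ?thesis
  proof (rule EMD_le_of_close_nodes[OF x y nn])
    fix i assume i: "i < ?n"
    have "dist (emb x i) (f (emb x i)) < r / 4" "dist (emb y i) (f (emb x i)) < r / 4"
      using f[of "emb x i"] f[of "emb y i"] nth(1)[OF i] norms i by auto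
    then show "dist (emb x i) (emb y i) \<le> r / 2"
      using dist_triangle[of "emb x i" "emb y i" "f (emb x i)"] by (simp add: dist_commute)
    have "\<lfloor>?q * wts x i\<rfloor> = \<lfloor>?q * wts y i\<rfloor>"
      using nth(2)[OF i] wts i q_pos by (simp add: nat_eq_iff2)
    then have "\<bar>?q * wts x i - ?q * wts y i\<bar> < 1" by linarith
    then have "?q * \<bar>wts x i - wts y i\<bar> < 1"
      using q_pos by (simp add: abs_mult right_diff_distrib[symmetric])
    then have "\<bar>wts x i - wts y i\<bar> \<le> 1 / ?q" using q_pos by (simp add: field_simps)
    also have "\<dots> \<le> r / (4 * ?n)" using q[of ?n] n r q_pos by (simp add: field_simps)
    finally show "\<bar>wts x i - wts y i\<bar> \<le> r / (4 * ?n)" .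
  qed
qed

lemma binomial_ceiling_le:
  assumes n: "n \<ge> 1" and r: "r > 0"
  shows "real ((n + nat \<lceil>4 * real n / r\<rceil>) choose n) \<le> (3 * (4 / r + 2)) ^ n"
proof -
  let ?q = "nat \<lceil>4 * real n / r\<rceil>"
  have "real ?q = of_int \<lceil>4 * real n / r\<rceil>" using r by simp
  then have "real ?q \<le> 4 * real n / r + 1" using of_int_ceiling_le_add_one[of "4 * real n / r"] by linarith
  then have "real (n + ?q) \<le> (4 / r + 2) * real n" using n by (simp add: algebra_simps)
  then have "3 * real (n + ?q) \<le> 3 * (4 / r + 2) * real n" unfolding mult.assoc by (rule mult_left_mono) simp
  then have "3 * real (n + ?q) / real n \<le> 3 * (4 / r + 2)" using n by (simp add: divide_le_eq)
  then have "(3 * real (n + ?q) / real n) ^ n \<le> (3 * (4 / r + 2)) ^ n" by (rule power_mono) simp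
  with binomial_le_power[OF n, of "n + ?q"] show ?thesis by linarith
qed

lemma finite_code_space: "finite P \<Longrightarrow> finite (code_space P q M)"
  unfolding code_space_def using finite_lists_sum_le
  by (auto intro!: finite_cartesian_product finite_lists_length_eq)

lemma card_code_space_le:
  assumes P: "finite P" "real (card P) \<le> A" and r: "r > 0"
  shows "real (card (code_space P (\<lambda>n. nat \<lceil>4 * real n / r\<rceil>) M)) \<le> (\<Sum>n\<in>{1..M}. (A * (3 * (4 / r + 2))) ^ n)"
proof -
  let ?q = "\<lambda>n. nat \<lceil>4 * real n / r\<rceil>"
  have A: "A \<ge> 0" using P(2) of_nat_0_le_iff[of "card P"] by linarith
  have "card (code_space P ?q M) \<le> (\<Sum>n\<in>{1..M}. card ({ps. set ps \<subseteq> P \<and> length ps = n}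
                                        \<times> {ks::nat list. length ks = n \<and> sum_list ks \<le> ?q n}))"
    unfolding code_space_def by (rule card_UN_le) simp
  also have "\<dots> = (\<Sum>n\<in>{1..M}. card P ^ n * ((n + ?q n) choose n))"
    by (intro sum.cong refl) (simp add: card_cartesian_product card_lists_length_eq P(1) card_lists_sum_le)
  finally have "real (card (code_space P ?q M)) \<le> real (\<Sum>n\<in>{1..M}. card P ^ n * ((n + ?q n) choose n))"
    by (simp only: of_nat_le_iff)
  also have "\<dots> = (\<Sum>n\<in>{1..M}. real (card P) ^ n * real ((n + ?q n) choose n))" by simp
  also have "\<dots> \<le> (\<Sum>n\<in>{1..M}. (A * (3 * (4 / r + 2))) ^ n)"
  proof (intro sum_mono)
    fix n assume "n \<in> {1..M}"
    then have "real ((n + ?q n) choose n) \<le> (3 * (4 / r + 2)) ^ n" using r by (intro binomial_ceiling_le) auto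
    with power_mono[OF P(2), of n] have "real (card P) ^ n * real ((n + ?q n) choose n) \<le> A ^ n * (3 * (4 / r + 2)) ^ n"
      by (intro mult_mono) (use r A in auto)
    then show "real (card P) ^ n * real ((n + ?q n) choose n) \<le> (A * (3 * (4 / r + 2))) ^ n"
      by (simp only: power_mult_distrib)
  qed
  finally show ?thesis .
qed

lemma graph_space_finite_net:
  fixes r :: real assumes r: "r > 0"
  obtains N :: "'d::finite graph set" where "finite N" "N \<subseteq> graph_space M"
    "\<And>x. x \<in> graph_space M \<Longrightarrow> \<exists>y\<in>N. EMD x y \<le> r"
    "real (card N) \<le> (\<Sum>n\<in>{1..M}. ((1 + 8 / r) ^ CARD('d) * (3 * (4 / r + 2))) ^ n)"
proof -
  have r4: "r / 4 > 0" using r by simp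
  obtain P :: "(real^'d) set" where P: "finite P" "real (card P) \<le> (1 + 2 / (r / 4)) ^ DIM(real^'d)"
    and cover: "\<And>u. u \<in> cball 0 1 \<Longrightarrow> \<exists>p\<in>P. dist u p < r / 4"
    using unit_ball_finite_net[where 'a = "real^'d", OF r4] by blast
  define f where "f u = (SOME p. p \<in> P \<and> dist u p < r / 4)" for u
  have f: "f u \<in> P \<and> dist u (f u) < r / 4" if "norm u \<le> 1" for u
    unfolding f_def by (rule someI_ex) (use cover that in auto)
  define q where "q n = nat \<lceil>4 * real n / r\<rceil>" for n
  have q: "real (q n) \<ge> 4 * real n / r" for n unfolding q_def by linarith
  let ?K = "code_space P q M"
  have code_K: "graph_code f q ` graph_space M \<subseteq> ?K"
    using graph_code_mem[of _ M f P q] f by blast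
  have code_close: "EMD x y \<le> r" if "x \<in> graph_space M" "y \<in> graph_space M"
    "graph_code f q x = graph_code f q y" for x y
    using that(3) f q by (intro EMD_le_if_graph_code_eq[OF that(1,2) r]) auto
  have "\<exists>N::'d graph set. finite N \<and> N \<subseteq> graph_space M \<and> card N \<le> card ?K
              \<and> (\<forall>x\<in>graph_space M. \<exists>y\<in>N. EMD x y \<le> r)"
    by (rule finite_net_of_code[where d = EMD and code = "graph_code f q",
          OF finite_code_space[OF P(1)] code_K code_close])
  then obtain N :: "'d graph set" where N: "finite N" "N \<subseteq> graph_space M" "card N \<le> card ?K"
    "\<forall>x\<in>graph_space M. \<exists>y\<in>N. EMD x y \<le> r"
    by blast
  have "real (card N) \<le> real (card ?K)" using N(3) by simp
  also have "\<dots> \<le> (\<Sum>n\<in>{1..M}. ((1 + 8 / r) ^ CARD('d) * (3 * (4 / r + 2))) ^ n)"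
    unfolding q_def using P r by (intro card_code_space_le) auto
  finally show ?thesis using that N by blast
qed

section \<open>Measurability of the features\<close>

lemma continuous_on_EMD_fixed_nnodes:
  fixes G :: "'d::finite graph"
  assumes "valid_weights G"
  shows "continuous_on {z. valid_weights (n, z)} (\<lambda>z. EMD G (n, z))"
proof (rule continuous_on_sequentiallyI)
  fix u :: "nat \<Rightarrow> (nat \<Rightarrow> real^'d) \<times> (nat \<Rightarrow> real)" and z
  assume u: "\<forall>k. u k \<in> {z. valid_weights (n, z)}" and z: "z \<in> {z. valid_weights (n, z)}"
    and lim: "u \<longlonglongrightarrow> z"
  have vu: "valid_weights (n, u k)" for k using u by simp
  have vz: "valid_weights (n, z)" using z by simp
  have coord: "((\<lambda>k. f k i) \<longlongrightarrow> l i) sequentially" if "(f \<longlongrightarrow> l) sequentially" for f :: "nat \<Rightarrow> nat \<Rightarrow> 'b::topological_space" and l i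
    using continuous_on_tendsto_compose[OF continuous_on_product_coordinates[of i] that] by simp
  define D where "D k = (\<Sum>i<n. \<Sum>j<n. dist (fst (u k) i) (fst z j))" for k
  define h where "h k = (\<Sum>i<n. min (snd (u k) i) (snd z i) * dist (fst (u k) i) (fst z i))
       + D k * (\<Sum>i<n. \<bar>snd (u k) i - snd z i\<bar>)" for k
  have bound: "norm (EMD G (n, u k) - EMD G (n, z)) \<le> h k" for k
  proof -
    have "norm (EMD G (n, u k) - EMD G (n, z)) = \<bar>EMD (n, u k) G - EMD (n, z) G\<bar>"
      using EMD_sym[of G "(n, u k)"] EMD_sym[of G "(n, z)"] by simp
    also have "\<dots> \<le> EMD (n, u k) (n, z)" by (rule abs_EMD_diff_le[OF vu vz])
    also have "\<dots> \<le> h k"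
      unfolding h_def
    proof (rule EMD_le_same_nnodes[OF vu vz, simplified])
      fix i j assume "i < n" "j < n"
      then show "dist (fst (u k) i) (fst z j) \<le> D k"
        unfolding D_def using member_le_sum[of i "{..<n}" "\<lambda>i. \<Sum>j<n. dist (fst (u k) i) (fst z j)"]
          member_le_sum[of j "{..<n}" "\<lambda>j. dist (fst (u k) i) (fst z j)"] by (simp add: sum_nonneg)
    qed
    finally show ?thesis .
  qed
  have "h \<longlonglongrightarrow> 0"
  proof -
    have lf: "(\<lambda>k. fst (u k) i) \<longlonglongrightarrow> fst z i" and ls: "(\<lambda>k. snd (u k) i) \<longlonglongrightarrow> snd z i" for i
      using coord[OF tendsto_fst[OF lim]] coord[OF tendsto_snd[OF lim]] by auto
    have "h \<longlonglongrightarrow> (\<Sum>i<n. min (snd z i) (snd z i) * dist (fst z i) (fst z i))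
         + (\<Sum>i<n. \<Sum>j<n. dist (fst z i) (fst z j)) * (\<Sum>i<n. \<bar>snd z i - snd z i\<bar>)"
      unfolding h_def D_def by (intro tendsto_intros lf ls)
    then show ?thesis by simp
  qed
  then have "(\<lambda>k. EMD G (n, u k) - EMD G (n, z)) \<longlonglongrightarrow> 0"
    by (rule Lim_null_comparison[OF always_eventually[OF allI[OF bound]]])
  then show "(\<lambda>k. EMD G (n, u k)) \<longlonglongrightarrow> EMD G (n, z)" by (rule LIM_zero_cancel)
qed

lemma borel_measurable_EMD_fixed_nnodes:
  fixes G :: "'d::finite graph"
  assumes G: "valid_weights G"
  shows "(\<lambda>z::(nat \<Rightarrow> real^'d) \<times> (nat \<Rightarrow> real). EMD G (n, z)) \<in> borel_measurable borel"
proof -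
  define V where "V = {z::(nat \<Rightarrow> real^'d) \<times> (nat \<Rightarrow> real). valid_weights (n, z)}"
  have [measurable]: "(\<lambda>z::(nat \<Rightarrow> real^'d) \<times> (nat \<Rightarrow> real). snd z i) \<in> borel_measurable borel" for i
    by (rule borel_measurable_continuous_onI,
        rule continuous_on_compose2[OF continuous_on_product_coordinates continuous_on_snd[OF continuous_on_id]]) simp
  have V_eq: "V = {z \<in> space borel. (\<forall>i\<in>{..<n}. snd z i \<ge> 0) \<and> (\<Sum>i<n. snd z i) = 1}"
    unfolding V_def valid_weights_def by auto
  have "V \<in> sets borel" unfolding V_eq by measurable
  moreover have "continuous_on V (\<lambda>z. EMD G (n, z))"
    unfolding V_def by (rule continuous_on_EMD_fixed_nnodes[OF G])
  ultimately have "(\<lambda>z. if z \<in> V then EMD G (n, z) else Inf {}) \<in> borel_measurable borel"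
    by (intro borel_measurable_continuous_on_if continuous_on_const)
  moreover have "(\<lambda>z. if z \<in> V then EMD G (n, z) else Inf {}) = (\<lambda>z. EMD G (n, z))"
    using EMD_of_invalid[OF G] unfolding V_def by fastforce
  ultimately show ?thesis by simp
qed

lemma sets_rg_space:
  "sets (rg_space :: 'd::finite graph measure) = sets (count_space UNIV \<Otimes>\<^sub>M (borel :: ((nat \<Rightarrow> real^'d) \<times> (nat \<Rightarrow> real)) measure))"
  unfolding rg_space_def
proof (rule sets_pair_measure_cong[OF refl])
  have "sets (PiM UNIV (\<lambda>_::nat. borel::(real^'d) measure) \<Otimes>\<^sub>M PiM UNIV (\<lambda>_::nat. borel::real measure))
     = sets ((borel::(nat \<Rightarrow> real^'d) measure) \<Otimes>\<^sub>M (borel::(nat \<Rightarrow> real) measure))"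
    by (rule sets_pair_measure_cong; rule sets_PiM_equal_borel)
  then show "sets (PiM UNIV (\<lambda>_::nat. borel::(real^'d) measure) \<Otimes>\<^sub>M PiM UNIV (\<lambda>_::nat. borel::real measure))
     = sets (borel :: ((nat \<Rightarrow> real^'d) \<times> (nat \<Rightarrow> real)) measure)"
    by (simp only: borel_prod)
qed

lemma borel_measurable_EMD_rg_space:
  fixes G :: "'d::finite graph"
  assumes "valid_weights G"
  shows "(\<lambda>\<omega>. EMD G \<omega>) \<in> borel_measurable (rg_space :: 'd graph measure)"
  unfolding measurable_cong_sets[OF sets_rg_space refl]
  by (rule measurable_pair_measure_countable1) (simp_all add: borel_measurable_EMD_fixed_nnodes[OF assms])

section \<open>Concentration\<close>

lemma indep_vars_PiM_components:
  fixes p :: "'a measure" and I :: "'i set"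
  assumes p: "prob_space p" and I: "I \<noteq> {}"
  shows "prob_space.indep_vars (PiM I (\<lambda>_. p)) (\<lambda>_. p) (\<lambda>i ws. ws i) I"
proof -
  interpret PP: prob_space "PiM I (\<lambda>_. p)" by (rule prob_space_PiM) (use p in auto)
  have rv: "(\<lambda>ws. ws i) \<in> measurable (PiM I (\<lambda>_. p)) p" if "i \<in> I" for i
    using measurable_component_singleton[of i I "\<lambda>_. p"] that by simp
  have d1: "distr (PiM I (\<lambda>_. p)) (PiM I (\<lambda>_. p)) (\<lambda>x. \<lambda>i\<in>I. x i) = PiM I (\<lambda>_. p)"
  proof -
    have "distr (PiM I (\<lambda>_. p)) (PiM I (\<lambda>_. p)) (\<lambda>x. \<lambda>i\<in>I. x i) = distr (PiM I (\<lambda>_. p)) (PiM I (\<lambda>_. p)) (\<lambda>x. x)"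
      by (rule distr_cong) (auto simp: space_PiM PiE_def restrict_def extensional_def fun_eq_iff)
    also have "\<dots> = PiM I (\<lambda>_. p)" by (rule distr_id)
    finally show ?thesis .
  qed
  have d2: "PiM I (\<lambda>i. distr (PiM I (\<lambda>_. p)) p (\<lambda>x. x i)) = PiM I (\<lambda>_. p)"
    by (rule PiM_cong) (auto intro: distr_PiM_component p)
  show ?thesis
    by (subst PP.indep_vars_iff_distr_eq_PiM'[OF I rv]) (auto simp: d1 d2)
qed

lemma Hoeffding_iid_abs_ge:
  fixes p :: "'a measure" and f :: "'a \<Rightarrow> real" and R :: nat
  assumes p: "prob_space p" and f: "f \<in> borel_measurable p" and f_range: "AE \<omega> in p. f \<omega> \<in> {0..1}"
    and R: "R > 0" and \<tau>: "\<tau> \<ge> 0"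
  shows "measure (PiM {..<R} (\<lambda>_. p))
     {ws \<in> space (PiM {..<R} (\<lambda>_. p)). real R * \<tau> \<le> \<bar>(\<Sum>i<R. f (ws i)) - real R * (\<integral>\<omega>. f \<omega> \<partial>p)\<bar>}
     \<le> 2 * exp (- 2 * real R * \<tau>\<^sup>2)"
proof -
  let ?P = "PiM {..<R} (\<lambda>_. p)"
  interpret PP: prob_space ?P by (rule prob_space_PiM) (use p in auto)
  have I: "{..<R} \<noteq> {}" using R by auto
  define X where "X i ws = f (ws i)" for i :: nat and ws :: "nat \<Rightarrow> 'a"
  have ind: "PP.indep_vars (\<lambda>_. borel) X {..<R}"
    unfolding X_def by (rule PP.indep_vars_compose2[OF indep_vars_PiM_components[OF p I]]) (rule f)
  have ae: "AE ws in ?P. X i ws \<in> {0..1}" if "i \<in> {..<R}" for i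
    unfolding X_def by (rule AE_PiM_component[OF _ that f_range]) (rule p)
  interpret H: Hoeffding_ineq ?P "{..<R}" X "\<lambda>_. 0" "\<lambda>_. 1" "\<Sum>i<R. PP.expectation (X i)"
  proof unfold_locales
    show "finite {..<R}" by simp
    show "PP.indep_vars (\<lambda>_. borel) X {..<R}" by (rule ind)
    fix i :: nat assume "i \<in> {..<R}" then show "AE x in ?P. X i x \<in> {0..1}" by (rule ae)
  qed
  have ex: "PP.expectation (X i) = (\<integral>\<omega>. f \<omega> \<partial>p)" if "i \<in> {..<R}" for i
  proof -
    have "PP.expectation (X i) = integral\<^sup>L (distr ?P p (\<lambda>ws. ws i)) f"
      unfolding X_def using that f by (subst integral_distr) (auto intro: measurable_component_singleton)
    also have "distr ?P p (\<lambda>ws. ws i) = p" by (rule distr_PiM_component[OF p that])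
    finally show ?thesis .
  qed
  have mu: "(\<Sum>i<R. PP.expectation (\<lambda>a. f (a i))) = real R * (\<integral>\<omega>. f \<omega> \<partial>p)" using ex unfolding X_def by simp
  have "PP.prob {x \<in> space ?P. real R * \<tau> \<le> \<bar>(\<Sum>i<R. X i x) - (\<Sum>i<R. PP.expectation (X i))\<bar>}
        \<le> 2 * exp (-2 * (real R * \<tau>)\<^sup>2 / (\<Sum>i<R. (1 - 0)\<^sup>2))"
    by (rule H.Hoeffding_ineq_abs_ge) (use R \<tau> in auto)
  also have "-2 * (real R * \<tau>)\<^sup>2 / (\<Sum>i<R. (1 - 0::real)\<^sup>2) = - 2 * real R * \<tau>\<^sup>2"
    using R by (simp add: power2_eq_square)
  finally show ?thesis unfolding X_def mu .
qed

lemma exp_diff_le_of_nonpos: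
  fixes u v :: real assumes "u \<le> v" "v \<le> 0"
  shows "exp v - exp u \<le> v - u"
proof -
  have "exp v * (1 + (u - v)) \<le> exp v * exp (u - v)" by (intro mult_left_mono exp_ge_add_one_self) simp
  then have "exp v - exp u \<le> exp v * (v - u)" by (simp add: exp_diff algebra_simps)
  also have "\<dots> \<le> v - u" using assms by (intro mult_left_le_one_le) auto
  finally show ?thesis .
qed

lemma abs_exp_diff_le_of_nonpos:
  fixes u v :: real assumes "u \<le> 0" "v \<le> 0"
  shows "\<bar>exp u - exp v\<bar> \<le> \<bar>u - v\<bar>"
  using exp_diff_le_of_nonpos[of u v] exp_diff_le_of_nonpos[of v u] assms
  by (cases "u \<le> v") (auto simp: abs_if)

lemma abs_mult_diff_le:
  fixes A B A' B' :: real
  assumes "0 \<le> B" "B \<le> 1" "0 \<le> A'" "A' \<le> 1"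
  shows "\<bar>A * B - A' * B'\<bar> \<le> \<bar>A - A'\<bar> + \<bar>B - B'\<bar>"
proof -
  have "\<bar>A * B - A' * B'\<bar> = \<bar>(A - A') * B + A' * (B - B')\<bar>" by (simp add: algebra_simps)
  also have "\<dots> \<le> \<bar>A - A'\<bar> * B + A' * \<bar>B - B'\<bar>"
    using abs_triangle_ineq[of "(A - A') * B" "A' * (B - B')"] assms by (simp add: abs_mult)
  also have "\<dots> \<le> \<bar>A - A'\<bar> * 1 + 1 * \<bar>B - B'\<bar>"
    using assms by (intro add_mono mult_mono) auto
  finally show ?thesis by simp
qed

lemma phi_pos_le_one:
  assumes "valid_weights x" "valid_weights w" "\<gamma> \<ge> 0"
  shows "0 < phi \<gamma> w x" "phi \<gamma> w x \<le> 1"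
  using EMD_nonneg[OF assms(1,2)] assms(3) unfolding phi_def by auto

lemma abs_phi_diff_le:
  assumes "valid_weights x" "valid_weights x'" "\<gamma> \<ge> 0"
  shows "\<bar>phi \<gamma> w x - phi \<gamma> w x'\<bar> \<le> \<gamma> * EMD x x'"
proof (cases "valid_weights w")
  case True
  have "\<bar>phi \<gamma> w x - phi \<gamma> w x'\<bar> \<le> \<bar>- \<gamma> * EMD x w - - \<gamma> * EMD x' w\<bar>"
    unfolding phi_def using EMD_nonneg[OF assms(1) True] EMD_nonneg[OF assms(2) True] assms(3)
    by (intro abs_exp_diff_le_of_nonpos) auto
  also have "\<dots> = \<gamma> * \<bar>EMD x w - EMD x' w\<bar>" using assms(3) by (simp add: abs_mult abs_minus_commute flip: right_diff_distrib)
  also have "\<dots> \<le> \<gamma> * EMD x x'" using abs_EMD_diff_le[OF assms(1,2)] assms(3) by (rule mult_left_mono)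
  finally show ?thesis .
next
  case False
  then show ?thesis
    using EMD_of_invalid[OF assms(1) False] EMD_of_invalid[OF assms(2) False] EMD_nonneg[OF assms(1,2)] assms(3)
    unfolding phi_def by simp
qed

lemma abs_phi_mult_diff_le:
  assumes "valid_weights x" "valid_weights x'" "valid_weights y" "valid_weights y'" "\<gamma> \<ge> 0"
  shows "\<bar>phi \<gamma> w x * phi \<gamma> w y - phi \<gamma> w x' * phi \<gamma> w y'\<bar> \<le> \<gamma> * (EMD x x' + EMD y y')"
proof (cases "valid_weights w")
  case True
  have "\<bar>phi \<gamma> w x * phi \<gamma> w y - phi \<gamma> w x' * phi \<gamma> w y'\<bar> \<le> \<bar>phi \<gamma> w x - phi \<gamma> w x'\<bar> + \<bar>phi \<gamma> w y - phi \<gamma> w y'\<bar>"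
    using phi_pos_le_one[OF assms(3) True assms(5)] phi_pos_le_one[OF assms(2) True assms(5)]
    by (intro abs_mult_diff_le) auto
  also have "\<dots> \<le> \<gamma> * (EMD x x' + EMD y y')"
    using abs_phi_diff_le[OF assms(1,2,5), of w] abs_phi_diff_le[OF assms(3,4,5), of w] by (simp add: distrib_left)
  finally show ?thesis .
next
  case False
  then show ?thesis
    using EMD_of_invalid[OF _ False] EMD_nonneg[OF assms(1,2)] EMD_nonneg[OF assms(3,4)] assms
    unfolding phi_def by simp
qed
section \<open>The uniform error bound\<close>

lemma sum_power_le_double_power:
  fixes A :: real assumes A: "A \<ge> 1"
  shows "(\<Sum>n\<in>{1..M}. A ^ n) \<le> (2 * A) ^ M"
proof -
  have "(\<Sum>n\<in>{1..M}. A ^ n) \<le> (\<Sum>n\<in>{1..M}. A ^ M)"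
    using A by (intro sum_mono power_increasing) auto
  also have "\<dots> = real M * A ^ M" by simp
  also have "\<dots> \<le> 2 ^ M * A ^ M"
    using A less_exp[of M] by (intro mult_right_mono) (simp_all add: less_imp_le)
  also have "\<dots> = (2 * A) ^ M" by (simp add: power_mult_distrib)
  finally show ?thesis .
qed

lemma net_factor_le_power:
  fixes b :: real and d :: nat assumes b: "b \<ge> 3/2" and d: "d \<ge> 1"
  shows "2 * ((1 + 16 * b) ^ d * (3 * (8 * b + 2))) \<le> (1 + b) ^ (12 * d)"
proof -
  define c where "c = 1 + b"
  have c: "c \<ge> 5/2" using b unfolding c_def by simp
  have h1: "(1 + 16 * b) ^ d \<le> (16 * c) ^ d" using b unfolding c_def by (intro power_mono) auto
  have h2: "3 * (8 * b + 2) \<le> 24 * c" unfolding c_def by simp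
  have "(1 + 16 * b) ^ d * (3 * (8 * b + 2)) \<le> (16 * c) ^ d * (24 * c)"
    by (rule mult_mono[OF h1 h2]) (use c b in auto)
  then have "2 * ((1 + 16 * b) ^ d * (3 * (8 * b + 2))) \<le> 2 * ((16 * c) ^ d * (24 * c))"
    by (rule mult_left_mono) simp
  also have "(16 * c) ^ d = 16 ^ d * c ^ d" by (rule power_mult_distrib)
  also have "2 * (16 ^ d * c ^ d * (24 * c)) = (48 * 16 ^ d) * c ^ (d + 1)"
    by (simp add: power_add mult_ac)
  also have "48 * 16 ^ d \<le> c ^ (10 * d)"
  proof -
    have "(48::real) * 16 ^ d \<le> 48 ^ d * 16 ^ d"
      using d by (intro mult_right_mono) (auto simp: power_increasing[of 1 d "48::real", simplified])
    also have "\<dots> = 768 ^ d" by (simp add: power_mult_distrib[symmetric])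
    also have "\<dots> \<le> ((5/2) ^ 10) ^ d" by (intro power_mono) (simp_all add: power_divide)
    also have "\<dots> \<le> (c ^ 10) ^ d" using c by (intro power_mono) auto
    also have "\<dots> = c ^ (10 * d)" by (simp add: power_mult)
    finally show ?thesis .
  qed
  also have "c ^ (10 * d) * c ^ (d + 1) = c ^ (11 * d + 1)" by (simp add: power_add[symmetric])
  also have "\<dots> \<le> c ^ (12 * d)" using d c by (intro power_increasing) auto
  finally show ?thesis using c unfolding c_def by (simp add: mult_right_mono)
qed

lemma square_mult_exp_le:
  fixes K c w :: real
  assumes K: "K \<ge> 1" and c: "0 \<le> c" "c \<le> K ^ 6" and small: "2 * K * exp (- w) \<le> 1"
  shows "c ^ 2 * (2 * exp (- 12 * w)) \<le> 2 * K * exp (- w)"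
proof -
  let ?q = "K * exp (- w)"
  have "c ^ 2 * exp (- 12 * w) \<le> (K ^ 6) ^ 2 * exp (- 12 * w)"
    using c by (intro mult_right_mono power_mono) auto
  also have "\<dots> = ?q ^ 12" by (simp add: power_mult_distrib exp_of_nat_mult[symmetric] flip: power_mult)
  also have "\<dots> \<le> ?q ^ 1" using K small by (intro power_decreasing) auto
  finally show ?thesis by simp
qed

lemma two_power_exp_le_of_sample_size:
  fixes B \<epsilon> \<delta> :: real and n R :: nat
  assumes B: "B \<ge> 1" and e: "\<epsilon> > 0" and d: "0 < \<delta>"
    and h: "real R \<ge> (8 / \<epsilon>\<^sup>2) * (real n * ln B + ln (2 / \<delta>))"
  shows "2 * B ^ n * exp (- real R * \<epsilon>\<^sup>2 / 8) \<le> \<delta>"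
proof -
  have "real R * \<epsilon>\<^sup>2 / 8 \<ge> real n * ln B + ln (2 / \<delta>)"
  proof -
    have "real R * (\<epsilon>\<^sup>2 / 8) \<ge> (8 / \<epsilon>\<^sup>2) * (real n * ln B + ln (2 / \<delta>)) * (\<epsilon>\<^sup>2 / 8)"
      using h e by (intro mult_right_mono) auto
    also have "(8 / \<epsilon>\<^sup>2) * (real n * ln B + ln (2 / \<delta>)) * (\<epsilon>\<^sup>2 / 8) = real n * ln B + ln (2 / \<delta>)"
      using e by (simp add: field_simps)
    finally show ?thesis by simp
  qed
  then have "exp (real n * ln B + ln (2 / \<delta>)) \<le> exp (real R * \<epsilon>\<^sup>2 / 8)" by simp
  moreover have "exp (real n * ln B + ln (2 / \<delta>)) = B ^ n * (2 / \<delta>)"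
    using B d by (simp add: exp_add exp_of_nat_mult)
  ultimately have "B ^ n * (2 / \<delta>) \<le> exp (real R * \<epsilon>\<^sup>2 / 8)" by simp
  then have "2 * B ^ n \<le> \<delta> * exp (real R * \<epsilon>\<^sup>2 / 8)" using d by (simp add: field_simps)
  then have "2 * B ^ n / exp (real R * \<epsilon>\<^sup>2 / 8) \<le> \<delta>" by (simp add: divide_le_eq)
  moreover have "exp (- real R * \<epsilon>\<^sup>2 / 8) = 1 / exp (real R * \<epsilon>\<^sup>2 / 8)"
    by (simp add: exp_minus[symmetric] exp_minus_inverse field_simps)
  ultimately show ?thesis by simp
qed

locale random_graph_features =
  fixes p :: "'d::finite graph measure" and \<gamma> :: real and R :: nat
  assumes prob_p: "prob_space p" and sets_p: "sets p = sets rg_space"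
    and AE_valid: "AE \<omega> in p. valid_weights \<omega>" and \<gamma>_pos: "\<gamma> > 0"
begin

abbreviation samples :: "(nat \<Rightarrow> 'd graph) measure" where
  "samples \<equiv> PiM {..<R} (\<lambda>_. p)"

definition kern_error :: "(nat \<Rightarrow> 'd graph) \<Rightarrow> 'd graph \<Rightarrow> 'd graph \<Rightarrow> real" where
  "kern_error ws x y = kern p \<gamma> x y - kern_approx R \<gamma> ws x y"

definition uniformly_accurate :: "nat \<Rightarrow> real \<Rightarrow> (nat \<Rightarrow> 'd graph) set" where
  "uniformly_accurate M \<epsilon> = {ws \<in> space samples. \<forall>x\<in>graph_space M. \<forall>y\<in>graph_space M. \<bar>kern_error ws x y\<bar> \<le> \<epsilon>}"

lemma \<gamma>_nonneg: "\<gamma> \<ge> 0"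
  using \<gamma>_pos by simp

lemma prob_space_samples: "prob_space samples"
  by (rule prob_space_PiM) (use prob_p in auto)

lemma borel_measurable_phi_mult:
  assumes "valid_weights x" "valid_weights y"
  shows "(\<lambda>\<omega>. phi \<gamma> \<omega> x * phi \<gamma> \<omega> y) \<in> borel_measurable p"
proof -
  have [measurable]: "(\<lambda>\<omega>. EMD z \<omega>) \<in> borel_measurable p" if "valid_weights z" for z
    using borel_measurable_EMD_rg_space[OF that] measurable_cong_sets[OF sets_p refl] by blast
  show ?thesis unfolding phi_def using assms by measurable
qed

lemma AE_phi_mult_unit_interval:
  assumes "valid_weights x" "valid_weights y"
  shows "AE \<omega> in p. phi \<gamma> \<omega> x * phi \<gamma> \<omega> y \<in> {0..1}"
  using AE_valid
proof eventually_elim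
  case (elim \<omega>)
  then show ?case using phi_pos_le_one[OF assms(1) elim \<gamma>_nonneg] phi_pos_le_one[OF assms(2) elim \<gamma>_nonneg]
    by (auto intro: mult_le_one)
qed

lemma integrable_phi_mult:
  assumes "valid_weights x" "valid_weights y"
  shows "integrable p (\<lambda>\<omega>. phi \<gamma> \<omega> x * phi \<gamma> \<omega> y)"
proof -
  interpret prob_space p by (rule prob_p)
  show ?thesis
  proof (rule integrable_const_bound[where B = 1])
    show "AE \<omega> in p. norm (phi \<gamma> \<omega> x * phi \<gamma> \<omega> y) \<le> 1"
      using AE_phi_mult_unit_interval[OF assms] by eventually_elim auto
  qed (rule borel_measurable_phi_mult[OF assms])
qed

lemma abs_kern_diff_le:
  assumes "valid_weights x" "valid_weights x'" "valid_weights y" "valid_weights y'"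
  shows "\<bar>kern p \<gamma> x y - kern p \<gamma> x' y'\<bar> \<le> \<gamma> * (EMD x x' + EMD y y')"
proof -
  interpret prob_space p by (rule prob_p)
  have "\<bar>kern p \<gamma> x y - kern p \<gamma> x' y'\<bar> = \<bar>\<integral>\<omega>. phi \<gamma> \<omega> x * phi \<gamma> \<omega> y - phi \<gamma> \<omega> x' * phi \<gamma> \<omega> y' \<partial>p\<bar>"
    unfolding kern_def using integrable_phi_mult assms by (simp add: integral_diff)
  also have "\<dots> \<le> (\<integral>\<omega>. \<bar>phi \<gamma> \<omega> x * phi \<gamma> \<omega> y - phi \<gamma> \<omega> x' * phi \<gamma> \<omega> y'\<bar> \<partial>p)"
    by (rule integral_abs_bound)
  also have "\<dots> \<le> \<gamma> * (EMD x x' + EMD y y')"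
    using integrable_phi_mult assms abs_phi_mult_diff_le[OF assms \<gamma>_nonneg] by (intro integral_le_const) auto
  finally show ?thesis .
qed

lemma abs_kern_approx_diff_le:
  assumes "valid_weights x" "valid_weights x'" "valid_weights y" "valid_weights y'"
  shows "\<bar>kern_approx R \<gamma> ws x y - kern_approx R \<gamma> ws x' y'\<bar> \<le> \<gamma> * (EMD x x' + EMD y y')"
proof -
  let ?c = "\<gamma> * (EMD x x' + EMD y y')"
  have "kern_approx R \<gamma> ws x y - kern_approx R \<gamma> ws x' y'
      = (1 / real R) * (\<Sum>i<R. phi \<gamma> (ws i) x * phi \<gamma> (ws i) y - phi \<gamma> (ws i) x' * phi \<gamma> (ws i) y')"
    unfolding kern_approx_def by (simp add: sum_subtractf right_diff_distrib)
  then have "\<bar>kern_approx R \<gamma> ws x y - kern_approx R \<gamma> ws x' y'\<bar>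
      = (1 / real R) * \<bar>\<Sum>i<R. phi \<gamma> (ws i) x * phi \<gamma> (ws i) y - phi \<gamma> (ws i) x' * phi \<gamma> (ws i) y'\<bar>"
    by (simp add: abs_mult)
  also have "\<dots> \<le> (1 / real R) * (\<Sum>i<R. ?c)"
    by (intro mult_left_mono order.trans[OF sum_abs] sum_mono abs_phi_mult_diff_le[OF assms \<gamma>_nonneg]) auto
  also have "\<dots> \<le> ?c"
    using \<gamma>_nonneg EMD_nonneg[OF assms(1,2)] EMD_nonneg[OF assms(3,4)] by (cases "R = 0") auto
  finally show ?thesis .
qed

lemma abs_kern_error_diff_le:
  assumes "valid_weights x" "valid_weights x'" "valid_weights y" "valid_weights y'"
  shows "\<bar>kern_error ws x y - kern_error ws x' y'\<bar> \<le> 2 * \<gamma> * (EMD x x' + EMD y y')"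
  using abs_kern_diff_le[OF assms] abs_kern_approx_diff_le[OF assms, of ws]
  unfolding kern_error_def by linarith

lemma borel_measurable_kern_error:
  assumes "valid_weights x" "valid_weights y"
  shows "(\<lambda>ws. kern_error ws x y) \<in> borel_measurable samples"
proof -
  have [measurable]: "(\<lambda>\<omega>. phi \<gamma> \<omega> x * phi \<gamma> \<omega> y) \<in> borel_measurable p"
    by (rule borel_measurable_phi_mult[OF assms])
  show ?thesis unfolding kern_error_def kern_approx_def by measurable
qed

lemma prob_kern_error_ge_le:
  assumes "valid_weights x" "valid_weights y" "R > 0" "\<tau> \<ge> 0"
  shows "measure samples {ws \<in> space samples. \<tau> \<le> \<bar>kern_error ws x y\<bar>} \<le> 2 * exp (- 2 * real R * \<tau>\<^sup>2)"
proof -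
  let ?f = "\<lambda>\<omega>. phi \<gamma> \<omega> x * phi \<gamma> \<omega> y"
  have "real R * \<bar>kern_error ws x y\<bar> = \<bar>(\<Sum>i<R. ?f (ws i)) - real R * (\<integral>\<omega>. ?f \<omega> \<partial>p)\<bar>" for ws
  proof -
    have "real R * \<bar>kern_error ws x y\<bar> = \<bar>real R * kern_error ws x y\<bar>" by (simp add: abs_mult)
    also have "real R * kern_error ws x y = real R * (\<integral>\<omega>. ?f \<omega> \<partial>p) - (\<Sum>i<R. ?f (ws i))"
      unfolding kern_error_def kern_approx_def kern_def using assms(3) by (simp add: right_diff_distrib)
    finally show ?thesis by (simp add: abs_minus_commute)
  qed
  moreover have "\<tau> \<le> a \<longleftrightarrow> real R * \<tau> \<le> real R * a" for a using assms(3) by simp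
  ultimately have "{ws \<in> space samples. \<tau> \<le> \<bar>kern_error ws x y\<bar>}
      = {ws \<in> space samples. real R * \<tau> \<le> \<bar>(\<Sum>i<R. ?f (ws i)) - real R * (\<integral>\<omega>. ?f \<omega> \<partial>p)\<bar>}"
    by auto
  then show ?thesis
    using Hoeffding_iid_abs_ge[OF prob_p borel_measurable_phi_mult[OF assms(1,2)]
            AE_phi_mult_unit_interval[OF assms(1,2)] assms(3,4)] by simp
qed

lemma sets_uniformly_accurate: "uniformly_accurate M \<epsilon> \<in> sets samples"
proof -
  have "\<forall>m. \<exists>N::'d graph set. finite N \<and> N \<subseteq> graph_space M \<and> (\<forall>x\<in>graph_space M. \<exists>y\<in>N. EMD x y \<le> 1 / Suc m)"
  proof
    fix m show "\<exists>N::'d graph set. finite N \<and> N \<subseteq> graph_space M \<and> (\<forall>x\<in>graph_space M. \<exists>y\<in>N. EMD x y \<le> 1 / Suc m)"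
      by (rule graph_space_finite_net[of "1 / Suc m" M]) auto
  qed
  then obtain N :: "nat \<Rightarrow> 'd graph set" where N: "\<And>m. finite (N m)" "\<And>m. N m \<subseteq> graph_space M"
    "\<And>m x. x \<in> graph_space M \<Longrightarrow> \<exists>y\<in>N m. EMD x y \<le> 1 / Suc m"
    by metis
  have "(\<forall>x\<in>graph_space M. \<forall>y\<in>graph_space M. \<bar>kern_error ws x y\<bar> \<le> \<epsilon>)
      \<longleftrightarrow> (\<forall>m. \<forall>x\<in>N m. \<forall>y\<in>N m. \<bar>kern_error ws x y\<bar> \<le> \<epsilon> + 2 * (2 * \<gamma>) / Suc m)" for ws
    by (rule bounded_iff_bounded_on_nets[where F = "kern_error ws" and d = EMD and L = "2 * \<gamma>", OF N(2,3)])
       (auto intro!: abs_kern_error_diff_le valid_weights_if_graph_space simp: \<gamma>_nonneg)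
  then have "uniformly_accurate M \<epsilon>
      = {ws \<in> space samples. \<forall>m. \<forall>x\<in>N m. \<forall>y\<in>N m. \<bar>kern_error ws x y\<bar> \<le> \<epsilon> + 2 * (2 * \<gamma>) / Suc m}"
    unfolding uniformly_accurate_def by blast
  also have "\<dots> \<in> sets samples"
  proof (intro pred_intros_countable(1) pred_intros_finite(3) N(1) predE)
    fix m x y assume "x \<in> N m" "y \<in> N m"
    then have "x \<in> graph_space M" "y \<in> graph_space M" using N(2) by auto
    then have [measurable]: "(\<lambda>ws. kern_error ws x y) \<in> borel_measurable samples"
      by (intro borel_measurable_kern_error valid_weights_if_graph_space)
    show "Measurable.pred samples (\<lambda>ws. \<bar>kern_error ws x y\<bar> \<le> \<epsilon> + 2 * (2 * \<gamma>) / Suc m)" by measurable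
  qed
  finally show ?thesis .
qed

text \<open>Union bound over pairs of net points: the kernel error moves by at most 4 \<gamma> r
  when both arguments move to their nearest net points.\<close>

lemma measure_uniformly_accurate_ge_net:
  fixes Nt :: "'d graph set"
  assumes R: "R > 0" and Nt: "finite Nt" "Nt \<subseteq> graph_space M"
    and cover: "\<And>x. x \<in> graph_space M \<Longrightarrow> \<exists>y\<in>Nt. EMD x y \<le> r" and r: "4 * \<gamma> * r < \<epsilon>"
  shows "measure samples (uniformly_accurate M \<epsilon>)
           \<ge> 1 - real (card Nt) ^ 2 * (2 * exp (- 2 * real R * (\<epsilon> - 4 * \<gamma> * r)\<^sup>2))"
proof -
  interpret S: prob_space samples by (rule prob_space_samples)
  define \<tau> where "\<tau> = \<epsilon> - 4 * \<gamma> * r"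
  define bad where "bad xy = {ws \<in> space samples. \<tau> \<le> \<bar>kern_error ws (fst xy) (snd xy)\<bar>}" for xy
  have valid_Nt: "valid_weights x" if "x \<in> Nt" for x using that Nt(2) valid_weights_if_graph_space by blast
  have bad_sets: "bad xy \<in> sets samples" if "xy \<in> Nt \<times> Nt" for xy
  proof -
    have [measurable]: "(\<lambda>ws. kern_error ws (fst xy) (snd xy)) \<in> borel_measurable samples"
      using that by (intro borel_measurable_kern_error valid_Nt) auto
    show ?thesis unfolding bad_def by measurable
  qed
  have "space samples - uniformly_accurate M \<epsilon> \<subseteq> (\<Union>xy\<in>Nt \<times> Nt. bad xy)"
  proof
    fix ws assume ws: "ws \<in> space samples - uniformly_accurate M \<epsilon>"
    then obtain x y where x: "x \<in> graph_space M" and y: "y \<in> graph_space M" and big: "\<bar>kern_error ws x y\<bar> > \<epsilon>"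
      unfolding uniformly_accurate_def by force
    obtain x' y' where x': "x' \<in> Nt" "EMD x x' \<le> r" and y': "y' \<in> Nt" "EMD y y' \<le> r"
      using cover[OF x] cover[OF y] by blast
    have "\<bar>kern_error ws x y - kern_error ws x' y'\<bar> \<le> 2 * \<gamma> * (EMD x x' + EMD y y')"
      using x y x'(1) y'(1) by (intro abs_kern_error_diff_le valid_weights_if_graph_space valid_Nt)
    also have "\<dots> \<le> 2 * \<gamma> * (r + r)" using \<gamma>_nonneg x'(2) y'(2) by (intro mult_left_mono add_mono) auto
    finally have "ws \<in> bad (x', y')" using ws big unfolding bad_def \<tau>_def by auto
    then show "ws \<in> (\<Union>xy\<in>Nt \<times> Nt. bad xy)" using x'(1) y'(1) by blast
  qed
  then have "measure samples (space samples - uniformly_accurate M \<epsilon>) \<le> measure samples (\<Union>xy\<in>Nt \<times> Nt. bad xy)"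
    using bad_sets Nt(1) by (intro S.finite_measure_mono) auto
  also have "\<dots> \<le> (\<Sum>xy\<in>Nt \<times> Nt. measure samples (bad xy))"
    using bad_sets Nt(1) by (intro S.finite_measure_subadditive_finite) auto
  also have "\<dots> \<le> (\<Sum>xy\<in>Nt \<times> Nt. 2 * exp (- 2 * real R * \<tau>\<^sup>2))"
    unfolding bad_def using R r
    by (intro sum_mono prob_kern_error_ge_le valid_Nt) (auto simp: \<tau>_def)
  also have "\<dots> = real (card Nt) ^ 2 * (2 * exp (- 2 * real R * \<tau>\<^sup>2))"
    by (simp add: card_cartesian_product power2_eq_square)
  finally show ?thesis
    using S.prob_compl[OF sets_uniformly_accurate[of M \<epsilon>]] unfolding \<tau>_def by linarith
qed

text \<open>For 16 \<gamma> / \<epsilon> \<le> 3/2 a single graph is a 2-net, since EMD \<le> 2 on the input space.\<close>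

lemma measure_uniformly_accurate_ge_small_scale:
  assumes "M \<ge> 1" "R > 0" "\<epsilon> > 0" "16 * \<gamma> / \<epsilon> \<le> 3/2"
  shows "measure samples (uniformly_accurate M \<epsilon>) \<ge> 1 - 2 * exp (- real R * \<epsilon>\<^sup>2 / 8)"
proof -
  define x0 :: "'d graph" where "x0 = (1, (\<lambda>_. 0), (\<lambda>_. 1))"
  have \<gamma>_small: "8 * \<gamma> \<le> 3 * \<epsilon> / 4" using assms by (simp add: field_simps)
  have meas: "measure samples (uniformly_accurate M \<epsilon>)
          \<ge> 1 - real (card {x0}) ^ 2 * (2 * exp (- 2 * real R * (\<epsilon> - 4 * \<gamma> * 2)\<^sup>2))"
  proof (rule measure_uniformly_accurate_ge_net[OF assms(2)])
    have "x0 \<in> graph_space M" unfolding x0_def by (rule single_node_mem_graph_space[OF assms(1)])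
    then show "\<exists>y\<in>{x0}. EMD x y \<le> 2" if "x \<in> graph_space M" for x using EMD_le_two[OF that] by blast
    show "{x0} \<subseteq> graph_space M" using \<open>x0 \<in> graph_space M\<close> by simp
    show "4 * \<gamma> * 2 < \<epsilon>" using \<gamma>_small assms(3) by simp
  qed simp
  have "(\<epsilon> / 4)\<^sup>2 \<le> (\<epsilon> - 4 * \<gamma> * 2)\<^sup>2" using \<gamma>_small assms(3) by (intro power_mono) auto
  then have exp_le: "exp (- 2 * real R * (\<epsilon> - 4 * \<gamma> * 2)\<^sup>2) \<le> exp (- real R * \<epsilon>\<^sup>2 / 8)"
    using mult_left_mono[of "(\<epsilon> / 4)\<^sup>2" "(\<epsilon> - 4 * \<gamma> * 2)\<^sup>2" "2 * real R"] by (simp add: power_divide)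
  have "real (card {x0}) ^ 2 * (2 * exp (- 2 * real R * (\<epsilon> - 4 * \<gamma> * 2)\<^sup>2))
      = 2 * exp (- 2 * real R * (\<epsilon> - 4 * \<gamma> * 2)\<^sup>2)" by simp
  with meas exp_le show ?thesis by linarith
qed

text \<open>Otherwise take an (\<epsilon> / (32 \<gamma>))-net: the deviation threshold becomes 7 \<epsilon> / 8, and the
  resulting exponent 49 R \<epsilon>^2 / 32 \<ge> 12 (R \<epsilon>^2 / 8) pays for the size of the net.\<close>

lemma measure_uniformly_accurate_ge_large_scale:
  fixes \<epsilon> :: real
  defines "B \<equiv> 1 + 16 * \<gamma> / \<epsilon>"
  assumes "R > 0" "\<epsilon> > 0" "16 * \<gamma> / \<epsilon> \<ge> 3/2"
    and small: "2 * B ^ (2 * CARD('d) * M) * exp (- real R * \<epsilon>\<^sup>2 / 8) \<le> 1"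
  shows "measure samples (uniformly_accurate M \<epsilon>) \<ge> 1 - 2 * B ^ (2 * CARD('d) * M) * exp (- real R * \<epsilon>\<^sup>2 / 8)"
proof -
  define b where "b = 16 * \<gamma> / \<epsilon>"
  define r where "r = \<epsilon> / (32 * \<gamma>)"
  define K where "K = B ^ (2 * CARD('d) * M)"
  define w where "w = real R * \<epsilon>\<^sup>2 / 8"
  have r: "r > 0" "8 / r = 16 * b" "4 / r = 8 * b" "4 * \<gamma> * r = \<epsilon> / 8"
    unfolding r_def b_def using \<gamma>_pos assms(3) by (simp_all add: field_simps)
  have K: "K \<ge> 1" unfolding K_def B_def using \<gamma>_pos assms(3) by simp
  obtain Nt :: "'d graph set" where Nt: "finite Nt" "Nt \<subseteq> graph_space M"
    "\<And>x. x \<in> graph_space M \<Longrightarrow> \<exists>y\<in>Nt. EMD x y \<le> r"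
    "real (card Nt) \<le> (\<Sum>n\<in>{1..M}. ((1 + 16 * b) ^ CARD('d) * (3 * (8 * b + 2))) ^ n)"
    using graph_space_finite_net[OF r(1), of M] unfolding r(2,3) by blast
  have "1 \<le> (1 + 16 * b) ^ CARD('d)" and "1 \<le> 3 * (8 * b + 2)" using assms(4) unfolding b_def by auto
  then have "1 \<le> (1 + 16 * b) ^ CARD('d) * (3 * (8 * b + 2))"
    using mult_mono[of 1 "(1 + 16 * b) ^ CARD('d)" 1 "3 * (8 * b + 2)"] by simp
  then have "real (card Nt) \<le> (2 * ((1 + 16 * b) ^ CARD('d) * (3 * (8 * b + 2)))) ^ M"
    using Nt(4) sum_power_le_double_power by (rule_tac order_trans) auto
  also have "\<dots> \<le> ((1 + b) ^ (12 * CARD('d))) ^ M"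
    using net_factor_le_power[of b "CARD('d)"] assms(4) unfolding b_def
    by (intro power_mono) (auto simp: Suc_le_eq)
  also have "\<dots> = K ^ 6" unfolding K_def B_def b_def by (simp add: power_mult[symmetric] mult_ac)
  finally have card_Nt: "real (card Nt) \<le> K ^ 6" .
  have "measure samples (uniformly_accurate M \<epsilon>)
          \<ge> 1 - real (card Nt) ^ 2 * (2 * exp (- 2 * real R * (\<epsilon> - 4 * \<gamma> * r)\<^sup>2))"
    using Nt r assms(3) by (intro measure_uniformly_accurate_ge_net[OF assms(2)]) auto
  moreover have "exp (- 2 * real R * (\<epsilon> - 4 * \<gamma> * r)\<^sup>2) \<le> exp (- 12 * w)"
    unfolding r(4) w_def using assms(3) by (simp add: power2_eq_square field_simps)
  then have "real (card Nt) ^ 2 * (2 * exp (- 2 * real R * (\<epsilon> - 4 * \<gamma> * r)\<^sup>2))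
      \<le> real (card Nt) ^ 2 * (2 * exp (- 12 * w))" by (intro mult_left_mono) auto
  moreover have "\<dots> \<le> 2 * K * exp (- w)"
    using small card_Nt K unfolding K_def w_def by (intro square_mult_exp_le) (auto simp: mult_ac)
  ultimately show ?thesis unfolding K_def w_def by (simp add: mult_ac)
qed

lemma measure_uniformly_accurate_ge:
  assumes "M \<ge> 1" "\<epsilon> > 0"
  shows "measure samples (uniformly_accurate M \<epsilon>)
           \<ge> 1 - 2 * (1 + 16 * \<gamma> / \<epsilon>) ^ (2 * CARD('d) * M) * exp (- real R * \<epsilon>\<^sup>2 / 8)"
proof -
  let ?B = "1 + 16 * \<gamma> / \<epsilon>" and ?n = "2 * CARD('d) * M"
  have B: "?B ^ ?n \<ge> 1" using \<gamma>_pos assms(2) by simp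
  consider "2 * ?B ^ ?n * exp (- real R * \<epsilon>\<^sup>2 / 8) > 1" | "R = 0"
    | "R > 0" "16 * \<gamma> / \<epsilon> \<le> 3/2" | "R > 0" "16 * \<gamma> / \<epsilon> \<ge> 3/2" "2 * ?B ^ ?n * exp (- real R * \<epsilon>\<^sup>2 / 8) \<le> 1"
    by linarith
  then show ?thesis
  proof cases
    case 1
    then show ?thesis using measure_nonneg[of samples "uniformly_accurate M \<epsilon>"] by linarith
  next
    case 2
    then have "1 - 2 * ?B ^ ?n * exp (- real R * \<epsilon>\<^sup>2 / 8) \<le> 0" using B by simp
    then show ?thesis using measure_nonneg[of samples "uniformly_accurate M \<epsilon>"] by linarith
  next
    case 3
    have "exp (- real R * \<epsilon>\<^sup>2 / 8) \<le> ?B ^ ?n * exp (- real R * \<epsilon>\<^sup>2 / 8)"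
      using mult_right_mono[OF B, of "exp (- real R * \<epsilon>\<^sup>2 / 8)"] by simp
    then show ?thesis using measure_uniformly_accurate_ge_small_scale[OF assms(1) 3(1) assms(2) 3(2)] by linarith
  next
    case 4
    then show ?thesis using measure_uniformly_accurate_ge_large_scale[OF 4(1) assms(2)] by simp
  qed
qed

end

theorem theorem4p3:
  fixes p :: "'d::finite graph measure"
    and M Dmax R :: nat and \<gamma> \<epsilon> :: real
  assumes "M \<ge> 1" and "Dmax \<ge> 1" and "\<gamma> > 0" and "\<epsilon> > 0"
    and "prob_space p" and "sets p = sets rg_space"
    and "AE \<omega> in p. \<omega> \<in> random_graphs Dmax"
  shows "measure (PiM {..<R} (\<lambda>_. p))
           {ws \<in> space (PiM {..<R} (\<lambda>_. p)).
              \<forall>Gx\<in>graph_space M. \<forall>Gy\<in>graph_space M.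
                \<bar>kern p \<gamma> Gx Gy - kern_approx R \<gamma> ws Gx Gy\<bar> \<le> \<epsilon>}
         \<ge> 1 - 2 * (1 + 16 * \<gamma> / \<epsilon>) ^ (2 * CARD('d) * M) * exp (- real R * \<epsilon>\<^sup>2 / 8)
      \<and> (\<forall>\<delta>. 0 < \<delta> \<and> \<delta> < 1 \<and>
            real R \<ge> (8 / \<epsilon>\<^sup>2) * (2 * real (CARD('d)) * real M * ln (1 + 16 * \<gamma> / \<epsilon>) + ln (2 / \<delta>))
          \<longrightarrow> measure (PiM {..<R} (\<lambda>_. p))
               {ws \<in> space (PiM {..<R} (\<lambda>_. p)).
                  \<forall>Gx\<in>graph_space M. \<forall>Gy\<in>graph_space M.
                    \<bar>kern p \<gamma> Gx Gy - kern_approx R \<gamma> ws Gx Gy\<bar> \<le> \<epsilon>} \<ge> 1 - \<delta>)"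
proof -
  have "AE \<omega> in p. valid_weights \<omega>"
    using assms(7) by eventually_elim (simp add: random_graphs_def)
  then interpret random_graph_features p \<gamma> R
    using assms(3,5,6) by (intro random_graph_features.intro)
  let ?B = "1 + 16 * \<gamma> / \<epsilon>" and ?n = "2 * CARD('d) * M"
  have bound: "measure samples (uniformly_accurate M \<epsilon>) \<ge> 1 - 2 * ?B ^ ?n * exp (- real R * \<epsilon>\<^sup>2 / 8)"
    by (rule measure_uniformly_accurate_ge[OF assms(1,4)])
  moreover have "measure samples (uniformly_accurate M \<epsilon>) \<ge> 1 - \<delta>"
    if "0 < \<delta>" "real R \<ge> (8 / \<epsilon>\<^sup>2) * (2 * real (CARD('d)) * real M * ln ?B + ln (2 / \<delta>))" for \<delta>
  proof -
    have "2 * ?B ^ ?n * exp (- real R * \<epsilon>\<^sup>2 / 8) \<le> \<delta>"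
      using that assms(3,4) by (intro two_power_exp_le_of_sample_size) auto
    then show ?thesis using bound by linarith
  qed
  ultimately show ?thesis unfolding uniformly_accurate_def kern_error_def by blast
qed

end
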